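(* Let $Q\in\mathbb{R}^{n\times n}$ be symmetric, $q\in\mathbb{R}^n$, $a_i\in\mathbb{R}^n$, $b_i\in\mathbb{R}$ ($i=1,\dots,p$), $\mathcal{F}=\{x:\langle a_i,x\rangle\le b_i,\ i=1,\dots,p\}$, and consider $$(\mathcal{P}_Q)\qquad \min_{x\in\mathcal{F}}\ \phi(x):=\tfrac12\langle Qx,x\rangle+\langle q,x\rangle .$$ Fix $\sigma>\max\{0,\lambda_{\max}(Q)\}$ and the DC decomposition $\phi=g-h$ with $g(x)=\frac\sigma2\|x\|^2+\langle q,x\rangle$, $h(x)=\frac12\langle(\sigma I-Q)x,x\rangle$ (so both are strongly convex with parameter $\rho:=\sigma-\lambda_{\max}(Q)>0$ if $\lambda_{\max}(Q)\ge0$, and $\rho:=\min\{\sigma,\sigma-\lambda_{\max}(Q)\}$ in general). Suppose $(\mathcal{P}_Q)$ has a solution, and let $\{x_k\}$ be an infinite sequence generated by Algorithm BDCA (see context) applied to this decomposition. Then $\{x_k\}$ converges geometrically to a KKT point $x^*$ of $(\mathcal{P}_Q)$: there exist $C>0$ and $\mu\in(0,1)$ such that $\|x_k-x^*\|\le C\mu^k$ for all sufficiently large $k$.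
   Context: $\lambda_{\max}(Q)$ is the largest eigenvalue of $Q$. A point $\bar x$ is a KKT point of $(\mathcal{P}_Q)$ if there exist $\mu_1,\dots,\mu_p\ge0$ with $0=Q\bar x+q+\sum_i\mu_ia_i$, $\mu_i(\langle a_i,\bar x\rangle-b_i)=0$ and $\langle a_i,\bar x\rangle\le b_i$ for all $i$. For $\bar x\in\mathcal{F}$, $I(\bar x):=\{i:\langle a_i,\bar x\rangle=b_i\}$. Algorithm BDCA for $\phi=g-h$ on $\mathcal{F}$: input $x_0\in\mathcal{F}$, $\alpha>0$, $\beta\in(0,1)$. At iteration $k$: set $u_k:=\nabla h(x_k)=(\sigma I-Q)x_k$ and let $y_k$ be the unique minimizer of $g(x)-\langle u_k,x\rangle$ over $\mathcal{F}$ (equivalently $y_k=P_{\mathcal{F}}(x_k-\frac1\sigma(Qx_k+q))$, $P_{\mathcal F}$ the Euclidean projection); set $d_k:=y_k-x_k$; if $d_k=0$ stop. If $I(y_k)\subseteq I(x_k)$: choose any $\bar\lambda_k\ge 0$, set $\lambda_k:=\bar\lambda_k$ and reduce it (to some value in $[0,\bar\lambda_k]$) so that $y_k+\lambda_kd_k\in\mathcal{F}$; then while $\phi(y_k+\lambda_kd_k)>\phi(y_k)-\alpha\lambda_k^2\|d_k\|^2$, replace $\lambda_k$ by $\beta\lambda_k$. Otherwise set $\lambda_k:=0$. Set $x_{k+1}:=y_k+\lambda_kd_k$. *)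

theory Defs
  imports "HOL-Analysis.Analysis"
begin

definition lambda_max :: "real^'n^'n \<Rightarrow> real" where
  "lambda_max Q = Max {l. \<exists>v. v \<noteq> 0 \<and> Q *v v = l *\<^sub>R v}"

definition phiQ :: "real^'n^'n \<Rightarrow> real^'n \<Rightarrow> real^'n \<Rightarrow> real" where
  "phiQ Q q x = (1/2) * ((Q *v x) \<bullet> x) + q \<bullet> x"

definition feas :: "(nat \<Rightarrow> real^'n) \<Rightarrow> (nat \<Rightarrow> real) \<Rightarrow> nat \<Rightarrow> (real^'n) set" where
  "feas a b p = {x. \<forall>i<p. a i \<bullet> x \<le> b i}"

definition active :: "(nat \<Rightarrow> real^'n) \<Rightarrow> (nat \<Rightarrow> real) \<Rightarrow> nat \<Rightarrow> real^'n \<Rightarrow> nat set" where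
  "active a b p x = {i. i < p \<and> a i \<bullet> x = b i}"

definition dc_g :: "real \<Rightarrow> real^'n \<Rightarrow> real^'n \<Rightarrow> real" where
  "dc_g \<sigma> q x = (\<sigma>/2) * (norm x)^2 + q \<bullet> x"

definition dc_h :: "real \<Rightarrow> real^'n^'n \<Rightarrow> real^'n \<Rightarrow> real" where
  "dc_h \<sigma> Q x = (1/2) * (((mat \<sigma> - Q) *v x) \<bullet> x)"

definition kkt :: "real^'n^'n \<Rightarrow> real^'n \<Rightarrow> (nat \<Rightarrow> real^'n) \<Rightarrow> (nat \<Rightarrow> real) \<Rightarrow> nat \<Rightarrow> real^'n \<Rightarrow> bool" where
  "kkt Q q a b p x \<longleftrightarrow>
     (\<exists>\<mu>::nat \<Rightarrow> real. (\<forall>i<p. \<mu> i \<ge> 0 \<and> \<mu> i * (a i \<bullet> x - b i) = 0 \<and> a i \<bullet> x \<le> b i) \<and>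
        Q *v x + q + (\<Sum>i<p. \<mu> i *\<^sub>R a i) = 0)"

text \<open>One (non-terminating) iteration of BDCA: x' is a possible successor of x.
  y is the unique minimizer of g - <u,.> over F with u = grad h(x) = (sigma I - Q) x,
  d = y - x must be nonzero (the algorithm does not stop), and the step size is
  obtained from some feasible initial trial lam0 \<ge> 0 (a value in [0, lam_bar] for
  some lam_bar \<ge> 0) by backtracking with factor beta until the Armijo-type
  condition holds (the j-th trial is the first accepted one).\<close>
definition bdca_step :: "real^'n^'n \<Rightarrow> real^'n \<Rightarrow> (nat \<Rightarrow> real^'n) \<Rightarrow> (nat \<Rightarrow> real) \<Rightarrow> nat \<Rightarrow>
    real \<Rightarrow> real \<Rightarrow> real \<Rightarrow> real^'n \<Rightarrow> real^'n \<Rightarrow> bool" where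
  "bdca_step Q q a b p \<sigma> \<alpha> \<beta> x x' \<longleftrightarrow>
     (\<exists>y. y \<in> feas a b p \<and>
        (\<forall>z\<in>feas a b p. dc_g \<sigma> q y - ((mat \<sigma> - Q) *v x) \<bullet> y \<le> dc_g \<sigma> q z - ((mat \<sigma> - Q) *v x) \<bullet> z) \<and>
        y - x \<noteq> 0 \<and>
        (if active a b p y \<subseteq> active a b p x then
           (\<exists>lam_bar lam0 j. lam_bar \<ge> 0 \<and> 0 \<le> lam0 \<and> lam0 \<le> lam_bar \<and>
              y + lam0 *\<^sub>R (y - x) \<in> feas a b p \<and>
              (\<forall>i<j. phiQ Q q (y + (\<beta>^i * lam0) *\<^sub>R (y - x)) >
                      phiQ Q q y - \<alpha> * (\<beta>^i * lam0)^2 * (norm (y - x))^2) \<and>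
              phiQ Q q (y + (\<beta>^j * lam0) *\<^sub>R (y - x)) \<le>
                      phiQ Q q y - \<alpha> * (\<beta>^j * lam0)^2 * (norm (y - x))^2 \<and>
              x' = y + (\<beta>^j * lam0) *\<^sub>R (y - x))
         else x' = y))"

end

theory Submission
  imports Defs
begin

text \<open>
  Each BDCA iteration decreases \<open>\<phi>\<close> by at least \<open>\<sigma>/2 \<parallel>y\<^sub>k - x\<^sub>k\<parallel>\<^sup>2\<close> (strong convexity of
  the subproblem plus the Armijo condition), so \<open>\<phi>(x\<^sub>k)\<close> converges to some \<open>L\<close> and the
  directions \<open>d\<^sub>k = y\<^sub>k - x\<^sub>k\<close> vanish. The optimality condition of the subproblem says that
  \<open>y\<^sub>k\<close> is stationary on its active face up to a residual of size \<open>O(\<parallel>d\<^sub>k\<parallel>)\<close>. Hoffman's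
  error bound for the linear system describing the stationary points of a face yields a
  stationary point \<open>z\<^sub>k\<close> with \<open>\<parallel>y\<^sub>k - z\<^sub>k\<parallel> = O(\<parallel>d\<^sub>k\<parallel>)\<close> (the Luo--Tseng error bound).
  Since \<open>\<phi>\<close> is constant on the stationary points of a face and there are finitely many faces,
  \<open>\<phi>(z\<^sub>k) = L\<close> eventually, whence \<open>\<phi>(y\<^sub>k) - L = O(\<parallel>d\<^sub>k\<parallel>\<^sup>2)\<close>. Together with the sufficient
  decrease this makes \<open>\<phi>(x\<^sub>k) - L\<close> decay Q-linearly, and as
  \<open>\<parallel>x\<^sub>k\<^sub>+\<^sub>1 - x\<^sub>k\<parallel>\<^sup>2 = O(\<phi>(x\<^sub>k) - L)\<close> the iterates converge R-linearly. Their limit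
  satisfies the variational inequality of \<open>(P\<^sub>Q)\<close>, hence is a KKT point.
\<close>

section \<open>Finitely generated cones\<close>

definition generated_cone :: "('k \<Rightarrow> 'a::real_vector) \<Rightarrow> 'k set \<Rightarrow> 'a set" where
  "generated_cone c I = {v. \<exists>l. (\<forall>i\<in>I. 0 \<le> l i) \<and> v = (\<Sum>i\<in>I. l i *\<^sub>R c i)}"

lemma generated_coneI: "\<forall>i\<in>I. 0 \<le> l i \<Longrightarrow> (\<Sum>i\<in>I. l i *\<^sub>R c i) \<in> generated_cone c I"
  unfolding generated_cone_def by blast

lemma convex_cone_generated_cone: "convex_cone (generated_cone c I)"
  unfolding convex_cone_iff
proof (intro conjI ballI allI impI)
  show "0 \<in> generated_cone c I"
    using generated_coneI[of I "\<lambda>_. 0" c] by simp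
next
  fix x y assume "x \<in> generated_cone c I" "y \<in> generated_cone c I"
  then obtain l1 l2 where "\<forall>i\<in>I. 0 \<le> l1 i" "x = (\<Sum>i\<in>I. l1 i *\<^sub>R c i)"
      "\<forall>i\<in>I. 0 \<le> l2 i" "y = (\<Sum>i\<in>I. l2 i *\<^sub>R c i)"
    unfolding generated_cone_def by blast
  then show "x + y \<in> generated_cone c I"
    using generated_coneI[of I "\<lambda>i. l1 i + l2 i" c] by (simp add: sum.distrib scaleR_add_left)
next
  fix x and t :: real assume "x \<in> generated_cone c I" "0 \<le> t"
  then obtain l where "\<forall>i\<in>I. 0 \<le> l i" "x = (\<Sum>i\<in>I. l i *\<^sub>R c i)"
    unfolding generated_cone_def by blast
  then show "t *\<^sub>R x \<in> generated_cone c I"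
    using \<open>0 \<le> t\<close> generated_coneI[of I "\<lambda>i. t * l i" c] by (simp add: scaleR_sum_right)
qed

lemma sum_delta_scaleR:
  fixes c :: "'k \<Rightarrow> 'a::real_vector"
  assumes "finite I" "j \<in> I"
  shows "(\<Sum>i\<in>I. (if i = j then 1 else 0) *\<^sub>R c i) = c j"
proof -
  have "(\<Sum>i\<in>I. (if i = j then 1 else 0) *\<^sub>R c i) = (\<Sum>i\<in>I. if i = j then c i else 0)"
    by (rule sum.cong) auto
  then show ?thesis using assms by simp
qed

lemma generated_cone_eq_convex_cone_hull:
  assumes "finite I"
  shows "generated_cone c I = convex_cone hull (c ` I)"
proof
  have "(\<Sum>i\<in>J. l i *\<^sub>R c i) \<in> convex_cone hull (c ` I)" if "J \<subseteq> I" "finite J" "\<forall>i\<in>J. 0 \<le> l i" for J l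
    using that(2,1,3)
    by (induction J rule: finite_induct)
      (auto simp: convex_cone_hull_contains_0 convex_cone_hull_add convex_cone_hull_mul hull_inc)
  then show "generated_cone c I \<subseteq> convex_cone hull (c ` I)"
    using assms unfolding generated_cone_def by blast
  have "c j \<in> generated_cone c I" if "j \<in> I" for j
    using generated_coneI[of I "\<lambda>i. if i = j then 1 else 0" c] sum_delta_scaleR[OF assms that, of c]
    by auto
  then have "c ` I \<subseteq> generated_cone c I" by blast
  then show "convex_cone hull (c ` I) \<subseteq> generated_cone c I"
    by (simp add: convex_cone_generated_cone hull_minimal)
qed

lemma polyhedron_generated_cone:
  fixes c :: "'k \<Rightarrow> 'a::euclidean_space"
  shows "finite I \<Longrightarrow> polyhedron (generated_cone c I)"
  by (simp add: generated_cone_eq_convex_cone_hull polyhedron_convex_cone_hull)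

lemma generated_cone_separation:
  fixes c :: "'k \<Rightarrow> 'a::euclidean_space"
  assumes "finite I" "w \<notin> generated_cone c I"
  shows "\<exists>u. u \<bullet> w < 0 \<and> (\<forall>k\<in>I. 0 \<le> u \<bullet> c k)"
proof -
  let ?C = "generated_cone c I"
  have cone: "convex_cone ?C" by (rule convex_cone_generated_cone)
  have "convex ?C" "closed ?C"
    using cone polyhedron_generated_cone[OF assms(1)] polyhedron_imp_closed
    by (auto simp: convex_cone_def)
  then obtain u \<beta> where u: "u \<bullet> w < \<beta>" "\<forall>v\<in>?C. \<beta> < u \<bullet> v"
    using separating_hyperplane_closed_point assms(2) by blast
  have "0 \<in> ?C" using cone convex_cone_contains_0 by blast
  then have "\<beta> < 0" using u(2) by fastforce
  have "0 \<le> u \<bullet> c k" if "k \<in> I" for k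
  proof (rule ccontr)
    assume neg: "\<not> 0 \<le> u \<bullet> c k"
    have "c k \<in> ?C"
      using that assms(1) by (simp add: generated_cone_eq_convex_cone_hull hull_inc)
    then have "(\<beta> / (u \<bullet> c k)) *\<^sub>R c k \<in> ?C"
      using convex_cone_scaleR[OF cone] neg \<open>\<beta> < 0\<close> by (simp add: divide_nonpos_neg)
    then show False using u(2) neg by fastforce
  qed
  then show ?thesis using u(1) \<open>\<beta> < 0\<close> by (intro exI[of _ u]) auto
qed

lemma exists_small_positive_multiplier:
  fixes s m :: "'k \<Rightarrow> real"
  assumes "finite B" "\<forall>k\<in>B. 0 < s k"
  shows "\<exists>t>0. \<forall>k\<in>B. t * m k \<le> s k"
  using assms
proof (induction B rule: finite_induct)
  case empty
  show ?case by (intro exI[of _ 1]) simp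
next
  case (insert j B)
  then obtain t where t: "0 < t" "\<forall>k\<in>B. t * m k \<le> s k" by auto
  define t' where "t' = min t (s j / (\<bar>m j\<bar> + 1))"
  have "0 < t'" using t insert.prems by (simp add: t'_def)
  moreover have "t' * m k \<le> s k" if "k \<in> B" for k
  proof -
    have "t' * m k \<le> t * m k \<or> t' * m k \<le> 0"
    proof (cases "0 \<le> m k")
      case True
      then show ?thesis by (simp add: t'_def mult_right_mono)
    next
      case False
      then show ?thesis using mult_pos_neg[OF \<open>0 < t'\<close>, of "m k"] by simp
    qed
    then show ?thesis using t(2) that insert.prems by fastforce
  qed
  moreover have "t' * m j \<le> s j"
  proof -
    have "t' * m j \<le> t' * (\<bar>m j\<bar> + 1)" using \<open>0 < t'\<close> by (intro mult_left_mono) auto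
    also have "\<dots> \<le> s j / (\<bar>m j\<bar> + 1) * (\<bar>m j\<bar> + 1)"
      unfolding t'_def by (intro mult_right_mono) auto
    also have "\<dots> = s j" by (simp add: add_pos_nonneg)
    finally show ?thesis .
  qed
  ultimately show ?case by auto
qed

lemma normal_vector_in_active_cone:
  fixes c :: "'k \<Rightarrow> 'a::euclidean_space"
  assumes fin: "finite I" and y: "\<forall>k\<in>I. c k \<bullet> y \<le> e k"
    and normal: "\<And>z. \<forall>k\<in>I. c k \<bullet> z \<le> e k \<Longrightarrow> w \<bullet> (z - y) \<le> 0"
  shows "w \<in> generated_cone c {k\<in>I. c k \<bullet> y = e k}"
proof (rule ccontr)
  txt \<open>Move from \<open>y\<close> against a vector separating \<open>w\<close> from the active cone: short steps stay
    feasible but increase \<open>w \<bullet> z\<close>.\<close>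
  define A where "A = {k\<in>I. c k \<bullet> y = e k}"
  assume "w \<notin> generated_cone c {k\<in>I. c k \<bullet> y = e k}"
  then obtain u where u: "u \<bullet> w < 0" "\<forall>k\<in>A. 0 \<le> u \<bullet> c k"
    using generated_cone_separation[of A w c] fin unfolding A_def by auto
  have "\<forall>k\<in>I - A. 0 < e k - c k \<bullet> y"
    using y unfolding A_def by (auto simp: order.strict_iff_order)
  then obtain t where t: "0 < t" "\<forall>k\<in>I - A. t * (c k \<bullet> - u) \<le> e k - c k \<bullet> y"
    using exists_small_positive_multiplier[of "I - A" "\<lambda>k. e k - c k \<bullet> y" "\<lambda>k. c k \<bullet> - u"] fin
    by blast
  have "\<forall>k\<in>I. c k \<bullet> (y + t *\<^sub>R - u) \<le> e k"
  proof
    fix k assume "k \<in> I"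
    have eq: "c k \<bullet> (y + t *\<^sub>R - u) = c k \<bullet> y + t * (c k \<bullet> - u)"
      by (simp add: inner_add_right inner_diff_right)
    show "c k \<bullet> (y + t *\<^sub>R - u) \<le> e k"
    proof (cases "k \<in> A")
      case True
      then have "t * (c k \<bullet> - u) \<le> 0"
        using u(2) t(1) by (simp add: inner_commute mult_nonneg_nonneg)
      then show ?thesis using True eq by (simp add: A_def)
    next
      case False
      then have "t * (c k \<bullet> - u) \<le> e k - c k \<bullet> y" using t(2) \<open>k \<in> I\<close> by blast
      then show ?thesis using eq by simp
    qed
  qed
  then have "w \<bullet> (t *\<^sub>R - u) \<le> 0" using normal[of "y + t *\<^sub>R - u"] by simp
  then show False using u(1) t(1) mult_pos_neg[of t "u \<bullet> w"] by (simp add: inner_commute)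
qed

lemma polyhedron_as_inequalities:
  fixes S :: "'a::euclidean_space set"
  assumes "polyhedron S"
  obtains H :: "'a set set" and g \<beta> where "finite H" "S = {x. \<forall>h\<in>H. g h \<bullet> x \<le> \<beta> h}"
proof -
  obtain F where F: "finite F" "S = \<Inter>F" "\<forall>h\<in>F. \<exists>a b. a \<noteq> 0 \<and> h = {x. a \<bullet> x \<le> b}"
    using assms unfolding polyhedron_def by blast
  have "\<forall>h\<in>F. \<exists>ab. h = {x. fst ab \<bullet> x \<le> snd ab}"
  proof
    fix h assume "h \<in> F"
    then obtain a b where "h = {x. a \<bullet> x \<le> b}" using F(3) by blast
    then show "\<exists>ab. h = {x. fst ab \<bullet> x \<le> snd ab}" by (intro exI[of _ "(a, b)"]) simp
  qed
  from bchoice[OF this] obtain ab where ab: "\<forall>h\<in>F. h = {x. fst (ab h) \<bullet> x \<le> snd (ab h)}"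
    by blast
  have "x \<in> S \<longleftrightarrow> (\<forall>h\<in>F. fst (ab h) \<bullet> x \<le> snd (ab h))" for x
  proof -
    have "x \<in> h \<longleftrightarrow> fst (ab h) \<bullet> x \<le> snd (ab h)" if "h \<in> F" for h
      by (subst bspec[OF ab that]) simp
    then show ?thesis using F(2) by auto
  qed
  then show ?thesis
    using F(1) that[of F "\<lambda>h. fst (ab h)" "\<lambda>h. snd (ab h)"] by blast
qed

lemma convex_hull_insert_zero_image:
  fixes c :: "'k \<Rightarrow> 'a::real_vector"
  assumes fin: "finite I"
  shows "convex hull (insert 0 (c ` I)) =
    {v. \<exists>l. (\<forall>i\<in>I. 0 \<le> l i) \<and> sum l I \<le> 1 \<and> v = (\<Sum>i\<in>I. l i *\<^sub>R c i)}"
    (is "_ = ?D")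
proof
  have "0 \<in> ?D" by (intro CollectI exI[of _ "\<lambda>_. 0"]) simp
  moreover have "c j \<in> ?D" if "j \<in> I" for j
    using that fin sum_delta_scaleR[OF fin that, of c]
    by (intro CollectI exI[of _ "\<lambda>i. if i = j then 1 else 0"]) auto
  moreover have "convex ?D"
    unfolding convex_def
  proof (intro allI ballI impI)
    fix x y and u v :: real assume "x \<in> ?D" "y \<in> ?D" and uv: "0 \<le> u" "0 \<le> v" "u + v = 1"
    then obtain l1 l2 where l1: "\<forall>i\<in>I. 0 \<le> l1 i" "sum l1 I \<le> 1" "x = (\<Sum>i\<in>I. l1 i *\<^sub>R c i)"
      and l2: "\<forall>i\<in>I. 0 \<le> l2 i" "sum l2 I \<le> 1" "y = (\<Sum>i\<in>I. l2 i *\<^sub>R c i)"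
      by blast
    have "sum (\<lambda>i. u * l1 i + v * l2 i) I = u * sum l1 I + v * sum l2 I"
      by (simp add: sum.distrib sum_distrib_left)
    also have "\<dots> \<le> u * 1 + v * 1" using uv l1 l2 by (intro add_mono mult_left_mono) auto
    finally have "sum (\<lambda>i. u * l1 i + v * l2 i) I \<le> 1" using uv by simp
    moreover have "u *\<^sub>R x + v *\<^sub>R y = (\<Sum>i\<in>I. (u * l1 i + v * l2 i) *\<^sub>R c i)"
      using l1 l2 by (simp add: scaleR_sum_right sum.distrib scaleR_add_left)
    ultimately show "u *\<^sub>R x + v *\<^sub>R y \<in> ?D"
      using uv l1 l2 by (intro CollectI exI[of _ "\<lambda>i. u * l1 i + v * l2 i"]) auto
  qed
  ultimately show "convex hull insert 0 (c ` I) \<subseteq> ?D"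
    by (intro hull_minimal) auto
next
  show "?D \<subseteq> convex hull insert 0 (c ` I)"
  proof
    fix v assume "v \<in> ?D"
    then obtain l where l: "\<forall>i\<in>I. 0 \<le> l i" "sum l I \<le> 1" "v = (\<Sum>i\<in>I. l i *\<^sub>R c i)"
      by blast
    define s where "s = sum l I"
    show "v \<in> convex hull insert 0 (c ` I)"
    proof (cases "s = 0")
      case True
      then have "\<forall>i\<in>I. l i = 0" using l(1) sum_nonneg_eq_0_iff[OF fin] unfolding s_def by blast
      then have "v = 0" using l(3) by simp
      then show ?thesis by (simp add: hull_inc)
    next
      case False
      then have "0 < s" using l(1) sum_nonneg[of I l] unfolding s_def by force
      define d where "d = (\<Sum>i\<in>I. (l i / s) *\<^sub>R c i)"
      have "d \<in> convex hull insert 0 (c ` I)"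
        unfolding d_def using \<open>0 < s\<close> l(1)
        by (intro convex_sum[OF fin convex_convex_hull])
          (auto simp: s_def sum_divide_distrib[symmetric] hull_inc)
      then have "s *\<^sub>R d + (1 - s) *\<^sub>R 0 \<in> convex hull insert 0 (c ` I)"
        using \<open>0 < s\<close> l(2) unfolding s_def
        by (intro convexD[OF convex_convex_hull _ hull_inc[OF insertI1]]) auto
      moreover have "v = s *\<^sub>R d + (1 - s) *\<^sub>R 0"
        using l(3) \<open>0 < s\<close> by (simp add: d_def scaleR_sum_right)
      ultimately show ?thesis by simp
    qed
  qed
qed

lemma polyhedron_contains_small_multiples:
  fixes D :: "'a::euclidean_space set"
  assumes "polyhedron D" "0 \<in> D"
  shows "\<exists>\<epsilon>>0. \<forall>s d. 0 \<le> s \<longrightarrow> d \<in> D \<longrightarrow> norm (s *\<^sub>R d) \<le> \<epsilon> \<longrightarrow> s *\<^sub>R d \<in> D"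
proof -
  obtain H :: "'a set set" and g \<beta> where H: "finite H" and D: "D = {x. \<forall>h\<in>H. g h \<bullet> x \<le> \<beta> h}"
    by (rule polyhedron_as_inequalities[OF assms(1)])
  have \<beta>_nonneg: "0 \<le> \<beta> h" if "h \<in> H" for h
    using assms(2) that unfolding D by simp
  have pos: "finite {h\<in>H. 0 < \<beta> h}" "\<forall>h\<in>{h\<in>H. 0 < \<beta> h}. 0 < \<beta> h"
    using H by auto
  obtain \<epsilon> where \<epsilon>: "0 < \<epsilon>" "\<forall>h\<in>{h\<in>H. 0 < \<beta> h}. \<epsilon> * norm (g h) \<le> \<beta> h"
    using exists_small_positive_multiplier[OF pos, of "\<lambda>h. norm (g h)"] by blast
  have "s *\<^sub>R d \<in> D" if s: "0 \<le> s" "d \<in> D" "norm (s *\<^sub>R d) \<le> \<epsilon>" for s d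
  proof -
    have "g h \<bullet> (s *\<^sub>R d) \<le> \<beta> h" if "h \<in> H" for h
    proof (cases "0 < \<beta> h")
      case True
      have "g h \<bullet> (s *\<^sub>R d) \<le> norm (g h) * norm (s *\<^sub>R d)" by (rule norm_cauchy_schwarz)
      also have "\<dots> \<le> \<epsilon> * norm (g h)"
        using mult_left_mono[OF s(3) norm_ge_zero[of "g h"]] by (simp add: mult.commute)
      also have "\<dots> \<le> \<beta> h" using \<epsilon>(2) that True by blast
      finally show ?thesis .
    next
      case False
      then have "\<beta> h = 0" using \<beta>_nonneg[OF that] by simp
      moreover have "g h \<bullet> d \<le> 0" using s(2) that \<open>\<beta> h = 0\<close> unfolding D by force
      ultimately show ?thesis using s(1) by (simp add: mult_nonneg_nonpos)
    qed
    then show ?thesis unfolding D by blast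
  qed
  then show ?thesis using \<epsilon>(1) by blast
qed

lemma generated_cone_bounded_coefficients:
  fixes c :: "'k \<Rightarrow> 'a::euclidean_space"
  assumes fin: "finite I"
  obtains \<kappa> where "0 \<le> \<kappa>"
    "\<And>v. v \<in> generated_cone c I \<Longrightarrow>
       \<exists>l. (\<forall>i\<in>I. 0 \<le> l i) \<and> v = (\<Sum>i\<in>I. l i *\<^sub>R c i) \<and> sum l I \<le> \<kappa> * norm v"
proof -
  define D where "D = convex hull (insert 0 (c ` I))"
  have D: "D = {v. \<exists>l. (\<forall>i\<in>I. 0 \<le> l i) \<and> sum l I \<le> 1 \<and> v = (\<Sum>i\<in>I. l i *\<^sub>R c i)}"
    unfolding D_def by (rule convex_hull_insert_zero_image[OF fin])
  have poly: "polyhedron D"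
    unfolding D_def using fin by (intro polytope_imp_polyhedron polytope_convex_hull) simp
  have zero: "0 \<in> D" unfolding D_def by (simp add: hull_inc)
  obtain \<epsilon> where \<epsilon>: "0 < \<epsilon>"
    "\<forall>s d. 0 \<le> s \<longrightarrow> d \<in> D \<longrightarrow> norm (s *\<^sub>R d) \<le> \<epsilon> \<longrightarrow> s *\<^sub>R d \<in> D"
    using polyhedron_contains_small_multiples[OF poly zero] by blast
  have coefficients: "\<exists>l. (\<forall>i\<in>I. 0 \<le> l i) \<and> v = (\<Sum>i\<in>I. l i *\<^sub>R c i) \<and> sum l I \<le> 1 / \<epsilon> * norm v"
    if v: "v \<in> generated_cone c I" for v
  proof (cases "v = 0")
    case True
    then show ?thesis by (intro exI[of _ "\<lambda>_. 0"]) simp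
  next
    case False
    obtain l where l: "\<forall>i\<in>I. 0 \<le> l i" "v = (\<Sum>i\<in>I. l i *\<^sub>R c i)"
      using v unfolding generated_cone_def by blast
    define s where "s = sum l I"
    have "s \<noteq> 0"
    proof
      assume "s = 0"
      then have "\<forall>i\<in>I. l i = 0" using l(1) sum_nonneg_eq_0_iff[OF fin] unfolding s_def by blast
      then show False using l(2) \<open>v \<noteq> 0\<close> by simp
    qed
    then have "0 < s" using l(1) sum_nonneg[of I l] unfolding s_def by force
    define d where "d = (\<Sum>i\<in>I. (l i / s) *\<^sub>R c i)"
    have "d \<in> D"
      unfolding D d_def using l(1) \<open>0 < s\<close>
      by (intro CollectI exI[of _ "\<lambda>i. l i / s"]) (simp add: s_def sum_divide_distrib[symmetric])
    have v: "v = s *\<^sub>R d" unfolding d_def l(2) using \<open>0 < s\<close> by (simp add: scaleR_sum_right)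
    define r where "r = \<epsilon> / norm v"
    have "0 < r" using \<epsilon>(1) False by (simp add: r_def)
    have "(r * s) *\<^sub>R d = r *\<^sub>R v" by (simp add: v)
    moreover have "norm (r *\<^sub>R v) = \<epsilon>" using False \<epsilon>(1) by (simp add: r_def)
    ultimately have "norm ((r * s) *\<^sub>R d) = \<epsilon>" by simp
    then have "(r * s) *\<^sub>R d \<in> D"
      using \<epsilon>(2)[rule_format, of "r * s" d] \<open>d \<in> D\<close> \<open>0 < r\<close> \<open>0 < s\<close> by simp
    then obtain l' where l': "\<forall>i\<in>I. 0 \<le> l' i" "sum l' I \<le> 1" "r *\<^sub>R v = (\<Sum>i\<in>I. l' i *\<^sub>R c i)"
      unfolding D v by auto
    show ?thesis
    proof (intro exI[of _ "\<lambda>i. l' i / r"] conjI ballI)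
      show "0 \<le> l' i / r" if "i \<in> I" for i using l'(1) that \<open>0 < r\<close> by simp
      have "v = inverse r *\<^sub>R (r *\<^sub>R v)" using \<open>0 < r\<close> by simp
      then show "v = (\<Sum>i\<in>I. (l' i / r) *\<^sub>R c i)"
        unfolding l'(3) by (simp add: scaleR_sum_right divide_inverse mult.commute)
      have "(\<Sum>i\<in>I. l' i / r) \<le> 1 / r" using l'(2) \<open>0 < r\<close> by (simp add: sum_divide_distrib[symmetric] divide_right_mono)
      then show "(\<Sum>i\<in>I. l' i / r) \<le> 1 / \<epsilon> * norm v" by (simp add: r_def)
    qed
  qed
  show ?thesis
    by (rule that[of "1 / \<epsilon>"]) (use \<epsilon>(1) coefficients in auto)
qed

section \<open>Hoffman's error bound\<close>

lemma polyhedral_set_closed: "closed {z::'a::euclidean_space. \<forall>k\<in>I. c k \<bullet> z \<le> e k}"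
proof -
  have "{z::'a. \<forall>k\<in>I. c k \<bullet> z \<le> e k} = (\<Inter>k\<in>I. {z. c k \<bullet> z \<le> e k})" by auto
  then show ?thesis by (simp add: closed_INT closed_halfspace_le)
qed

lemma polyhedral_set_convex: "convex {z::'a::euclidean_space. \<forall>k\<in>I. c k \<bullet> z \<le> e k}"
proof -
  have "{z::'a. \<forall>k\<in>I. c k \<bullet> z \<le> e k} = (\<Inter>k\<in>I. {z. c k \<bullet> z \<le> e k})" by auto
  then show ?thesis by (simp add: convex_INT convex_halfspace_le)
qed

lemma hoffman_bound:
  fixes c :: "'k \<Rightarrow> 'a::euclidean_space"
  assumes fin: "finite I" and feasible: "\<exists>z. \<forall>k\<in>I. c k \<bullet> z \<le> e k"
  obtains \<tau> where "0 \<le> \<tau>"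
    "\<And>z s. 0 \<le> s \<Longrightarrow> \<forall>k\<in>I. c k \<bullet> z \<le> e k + s \<Longrightarrow>
       \<exists>z'. (\<forall>k\<in>I. c k \<bullet> z' \<le> e k) \<and> norm (z - z') \<le> \<tau> * s"
proof -
  have "\<forall>J\<in>Pow I. \<exists>\<kappa>. 0 \<le> \<kappa> \<and> (\<forall>v\<in>generated_cone c J.
          \<exists>l. (\<forall>i\<in>J. 0 \<le> l i) \<and> v = (\<Sum>i\<in>J. l i *\<^sub>R c i) \<and> sum l J \<le> \<kappa> * norm v)"
  proof
    fix J assume "J \<in> Pow I"
    then have "finite J" using fin finite_subset by blast
    obtain \<kappa> where "0 \<le> \<kappa>" "\<And>v. v \<in> generated_cone c J \<Longrightarrow>
          \<exists>l. (\<forall>i\<in>J. 0 \<le> l i) \<and> v = (\<Sum>i\<in>J. l i *\<^sub>R c i) \<and> sum l J \<le> \<kappa> * norm v"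
      using generated_cone_bounded_coefficients[OF \<open>finite J\<close>, where c = c] by metis
    then show "\<exists>\<kappa>. 0 \<le> \<kappa> \<and> (\<forall>v\<in>generated_cone c J.
          \<exists>l. (\<forall>i\<in>J. 0 \<le> l i) \<and> v = (\<Sum>i\<in>J. l i *\<^sub>R c i) \<and> sum l J \<le> \<kappa> * norm v)"
      by blast
  qed
  from bchoice[OF this] obtain \<kappa> where \<kappa>: "\<forall>J\<in>Pow I. 0 \<le> \<kappa> J \<and> (\<forall>v\<in>generated_cone c J.
      \<exists>l. (\<forall>i\<in>J. 0 \<le> l i) \<and> v = (\<Sum>i\<in>J. l i *\<^sub>R c i) \<and> sum l J \<le> \<kappa> J * norm v)"
    by blast
  define \<tau> where "\<tau> = sum \<kappa> (Pow I)"
  have "0 \<le> \<tau>" unfolding \<tau>_def using \<kappa> by (intro sum_nonneg) blast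
  have \<kappa>_le: "\<kappa> J \<le> \<tau>" if "J \<in> Pow I" for J
    unfolding \<tau>_def using fin that \<kappa> by (intro member_le_sum) auto
  define S where "S = {z::'a. \<forall>k\<in>I. c k \<bullet> z \<le> e k}"
  have "closed S" "convex S" "S \<noteq> {}"
    using polyhedral_set_closed polyhedral_set_convex feasible unfolding S_def by auto
  have "\<exists>z'. (\<forall>k\<in>I. c k \<bullet> z' \<le> e k) \<and> norm (z - z') \<le> \<tau> * s"
    if s: "0 \<le> s" and z: "\<forall>k\<in>I. c k \<bullet> z \<le> e k + s" for z s
  proof -
    define z' where "z' = closest_point S z"
    have "z' \<in> S" unfolding z'_def using closest_point_in_set \<open>closed S\<close> \<open>S \<noteq> {}\<close> by blast
    define A where "A = {k\<in>I. c k \<bullet> z' = e k}"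
    have "A \<in> Pow I" unfolding A_def by blast
    have "z - z' \<in> generated_cone c A"
      unfolding A_def using \<open>z' \<in> S\<close> closest_point_dot[OF \<open>convex S\<close> \<open>closed S\<close>]
      by (intro normal_vector_in_active_cone[OF fin]) (auto simp: S_def z'_def)
    then obtain l where l: "\<forall>i\<in>A. 0 \<le> l i" "z - z' = (\<Sum>i\<in>A. l i *\<^sub>R c i)"
        "sum l A \<le> \<kappa> A * norm (z - z')"
      using \<kappa> \<open>A \<in> Pow I\<close> by blast
    have "(norm (z - z'))\<^sup>2 = (z - z') \<bullet> (z - z')" by (simp add: power2_norm_eq_inner)
    also have "\<dots> = (\<Sum>i\<in>A. l i * (c i \<bullet> (z - z')))"
      by (subst (1) l(2)) (simp add: inner_sum_left)
    also have "\<dots> = (\<Sum>i\<in>A. l i * (c i \<bullet> z - e i))"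
      by (rule sum.cong) (auto simp: A_def inner_diff_right)
    also have "\<dots> \<le> (\<Sum>i\<in>A. l i * s)"
      using l(1) z by (intro sum_mono mult_left_mono) (auto simp: A_def)
    also have "\<dots> = s * sum l A" by (simp add: sum_distrib_left mult.commute)
    also have "\<dots> \<le> s * (\<tau> * norm (z - z'))"
      using l(3) mult_right_mono[OF \<kappa>_le[OF \<open>A \<in> Pow I\<close>] norm_ge_zero[of "z - z'"]] s
      by (intro mult_left_mono) auto
    finally have "norm (z - z') * norm (z - z') \<le> (\<tau> * s) * norm (z - z')"
      by (simp add: power2_eq_square algebra_simps)
    then have "norm (z - z') \<le> \<tau> * s"
      using \<open>0 \<le> \<tau>\<close> s by (cases "norm (z - z') = 0") auto
    then show ?thesis using \<open>z' \<in> S\<close> unfolding S_def by blast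
  qed
  then show ?thesis using that \<open>0 \<le> \<tau>\<close> by blast
qed

lemma infeasible_system_slack_bound:
  fixes c :: "'k \<Rightarrow> 'a::euclidean_space"
  assumes fin: "finite I" and infeasible: "\<nexists>z. \<forall>k\<in>I. c k \<bullet> z \<le> e k"
  obtains \<delta> where "0 < \<delta>" "\<And>z s. \<forall>k\<in>I. c k \<bullet> z \<le> e k + s \<Longrightarrow> \<delta> \<le> s"
proof -
  txt \<open>Farkas: \<open>(0, -1)\<close> is a nonnegative combination of the rows \<open>(c k, e k)\<close> and \<open>(0, 1)\<close>.\<close>
  define r :: "'k option \<Rightarrow> 'a \<times> real" where "r = case_option (0, 1) (\<lambda>k. (c k, e k))"
  define I' where "I' = insert None (Some ` I)"
  have "finite I'" unfolding I'_def using fin by simp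
  have "(0, -1) \<in> generated_cone r I'"
  proof (rule ccontr)
    assume "(0, -1) \<notin> generated_cone r I'"
    then obtain u where u: "u \<bullet> (0, -1) < 0" "\<forall>k\<in>I'. 0 \<le> u \<bullet> r k"
      using generated_cone_separation[OF \<open>finite I'\<close>] by blast
    obtain uv ut where uu: "u = (uv, ut)" by (cases u)
    have "0 < ut" using u(1) uu by simp
    have "c k \<bullet> (- (1 / ut) *\<^sub>R uv) \<le> e k" if "k \<in> I" for k
    proof -
      have "0 \<le> uv \<bullet> c k + ut * e k"
        using u(2) that uu by (auto simp: I'_def r_def inner_commute)
      then show ?thesis using \<open>0 < ut\<close> by (simp add: inner_commute field_simps)
    qed
    then show False using infeasible by blast
  qed
  then obtain l where l: "\<forall>i\<in>I'. 0 \<le> l i" "(0, -1) = (\<Sum>i\<in>I'. l i *\<^sub>R r i)"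
    unfolding generated_cone_def by blast
  define m where "m k = l (Some k)" for k
  have split: "(\<Sum>i\<in>I'. l i *\<^sub>R r i) = l None *\<^sub>R (0, 1) + (\<Sum>k\<in>I. m k *\<^sub>R (c k, e k))"
    unfolding I'_def using fin by (simp add: sum.reindex r_def m_def)
  have combination: "(\<Sum>k\<in>I. m k *\<^sub>R c k) = 0"
    using arg_cong[OF l(2), of fst] split by (simp add: fst_sum)
  have "-1 = l None + (\<Sum>k\<in>I. m k * e k)"
    using arg_cong[OF l(2), of snd] split by (simp add: snd_sum)
  moreover have "0 \<le> l None" using l(1) unfolding I'_def by blast
  ultimately have rhs: "(\<Sum>k\<in>I. m k * e k) \<le> -1" by linarith
  have m_nonneg: "\<forall>k\<in>I. 0 \<le> m k" using l(1) unfolding I'_def m_def by blast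
  have slack: "1 \<le> s * sum m I" if z: "\<forall>k\<in>I. c k \<bullet> z \<le> e k + s" for z s
  proof -
    have "0 = (\<Sum>k\<in>I. m k *\<^sub>R c k) \<bullet> z" using combination by simp
    also have "\<dots> = (\<Sum>k\<in>I. m k * (c k \<bullet> z))" by (simp add: inner_sum_left)
    also have "\<dots> \<le> (\<Sum>k\<in>I. m k * (e k + s))"
      using m_nonneg z by (intro sum_mono mult_left_mono) auto
    also have "\<dots> = (\<Sum>k\<in>I. m k * e k) + s * sum m I"
      by (simp add: algebra_simps sum.distrib sum_distrib_left)
    finally show ?thesis using rhs by linarith
  qed
  have "sum m I \<noteq> 0"
  proof
    assume "sum m I = 0"
    then have "\<forall>k\<in>I. m k = 0" using sum_nonneg_eq_0_iff[OF fin] m_nonneg by blast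
    then show False using rhs by simp
  qed
  then have "0 < sum m I" using sum_nonneg[of I m] m_nonneg by force
  show ?thesis
  proof (rule that[of "1 / sum m I"])
    show "0 < 1 / sum m I" using \<open>0 < sum m I\<close> by simp
    show "1 / sum m I \<le> s" if "\<forall>k\<in>I. c k \<bullet> z \<le> e k + s" for z s
      using slack[OF that] \<open>0 < sum m I\<close> by (simp add: divide_le_eq mult.commute)
  qed
qed

lemma hoffman_local_bound:
  fixes c :: "'k \<Rightarrow> 'a::euclidean_space"
  assumes fin: "finite I"
  obtains \<delta> \<tau> where "0 < \<delta>" "0 \<le> \<tau>"
    "\<And>z s. 0 \<le> s \<Longrightarrow> s < \<delta> \<Longrightarrow> \<forall>k\<in>I. c k \<bullet> z \<le> e k + s \<Longrightarrow>
       \<exists>z'. (\<forall>k\<in>I. c k \<bullet> z' \<le> e k) \<and> norm (z - z') \<le> \<tau> * s"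
proof (cases "\<exists>z. \<forall>k\<in>I. c k \<bullet> z \<le> e k")
  case True
  obtain \<tau> where "0 \<le> \<tau>"
    "\<And>z s. 0 \<le> s \<Longrightarrow> \<forall>k\<in>I. c k \<bullet> z \<le> e k + s \<Longrightarrow>
       \<exists>z'. (\<forall>k\<in>I. c k \<bullet> z' \<le> e k) \<and> norm (z - z') \<le> \<tau> * s"
    using hoffman_bound[OF fin True] by metis
  then show ?thesis using that[of 1 \<tau>] by simp
next
  case False
  obtain \<delta> where "0 < \<delta>" "\<And>z s. \<forall>k\<in>I. c k \<bullet> z \<le> e k + s \<Longrightarrow> \<delta> \<le> s"
    using infeasible_system_slack_bound[OF fin False] by metis
  then show ?thesis using that[of \<delta> 0] by force
qed

section \<open>Symmetric matrices and the objective\<close>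

lemma mat_vector_mult: "(mat s :: real^'n^'n) *v x = s *\<^sub>R x"
  by (simp add: vec_eq_iff matrix_vector_mult_def mat_def if_distrib[of "\<lambda>t. t * _"] cong: if_cong)

lemma symmetric_matrix_inner:
  fixes Q :: "real^'n^'n"
  assumes "transpose Q = Q"
  shows "(Q *v x) \<bullet> y = x \<bullet> (Q *v y)"
  by (metis assms dot_lmul_matrix vector_transpose_matrix)

lemma quadratic_form_add:
  fixes Q :: "real^'n^'n"
  assumes "transpose Q = Q"
  shows "(x + y) \<bullet> (Q *v (x + y)) = x \<bullet> (Q *v x) + 2 * (y \<bullet> (Q *v x)) + y \<bullet> (Q *v y)"
proof -
  have "x \<bullet> (Q *v y) = y \<bullet> (Q *v x)"
    using symmetric_matrix_inner[OF assms, of y x] by (simp add: inner_commute)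
  then show ?thesis by (simp add: matrix_vector_right_distrib inner_add_left inner_add_right)
qed

lemma quadratic_form_scaleR:
  fixes Q :: "real^'n^'n"
  shows "(t *\<^sub>R x) \<bullet> (Q *v (t *\<^sub>R x)) = t\<^sup>2 * (x \<bullet> (Q *v x))"
  by (simp add: matrix_vector_mult_scaleR power2_eq_square)

lemma norm_add_scaleR_square:
  "(norm (y + t *\<^sub>R w))\<^sup>2 = (norm y)\<^sup>2 + 2 * t * (y \<bullet> w) + t\<^sup>2 * (norm w)\<^sup>2"
  unfolding power2_norm_eq_inner
  by (simp add: inner_add_left inner_add_right inner_commute power2_eq_square algebra_simps)

lemma quadratic_form_maximizer_eigenvector:
  fixes Q :: "real^'n^'n"
  assumes sym: "transpose Q = Q" and nv: "norm v = 1"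
    and bound: "\<And>u. u \<bullet> (Q *v u) \<le> (v \<bullet> (Q *v v)) * (norm u)\<^sup>2"
  shows "Q *v v = (v \<bullet> (Q *v v)) *\<^sub>R v"
proof -
  define m where "m = v \<bullet> (Q *v v)"
  define r where "r = Q *v v - m *\<^sub>R v"
  have "r = 0"
  proof (rule ccontr)
    txt \<open>Otherwise moving from \<open>v\<close> in direction \<open>r\<close> would increase the Rayleigh quotient.\<close>
    assume "r \<noteq> 0"
    define K where "K = r \<bullet> (Q *v r) - m * (norm r)\<^sup>2"
    define t where "t = (norm r)\<^sup>2 / (\<bar>K\<bar> + 1)"
    have "0 < (norm r)\<^sup>2" using \<open>r \<noteq> 0\<close> by simp
    then have "0 < t" unfolding t_def by (simp add: add_nonneg_pos)
    have "r \<bullet> (Q *v v) - m * (r \<bullet> v) = (norm r)\<^sup>2"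
      unfolding r_def by (simp add: power2_norm_eq_inner inner_diff_left inner_diff_right algebra_simps)
    moreover have "(v + t *\<^sub>R r) \<bullet> (Q *v (v + t *\<^sub>R r)) = m + 2 * t * (r \<bullet> (Q *v v)) + t\<^sup>2 * (r \<bullet> (Q *v r))"
      using quadratic_form_add[OF sym, of v "t *\<^sub>R r"] quadratic_form_scaleR[of t r Q]
      by (simp add: m_def)
    moreover have "(norm (v + t *\<^sub>R r))\<^sup>2 = 1 + 2 * t * (v \<bullet> r) + t\<^sup>2 * (norm r)\<^sup>2"
      using norm_add_scaleR_square[of v t r] nv by simp
    ultimately have "t * (2 * (norm r)\<^sup>2 + t * K) \<le> 0"
      using bound[of "v + t *\<^sub>R r"] unfolding K_def m_def[symmetric]
      by (simp add: algebra_simps inner_commute power2_eq_square)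
    then have "2 * (norm r)\<^sup>2 + t * K \<le> 0"
      using \<open>0 < t\<close> by (simp add: mult_le_0_iff)
    moreover have "t * \<bar>K\<bar> < (norm r)\<^sup>2"
    proof -
      have "t * (\<bar>K\<bar> + 1) = (norm r)\<^sup>2" unfolding t_def by simp
      then show ?thesis using \<open>0 < t\<close> by (simp add: algebra_simps)
    qed
    moreover have "- (t * K) \<le> t * \<bar>K\<bar>" using \<open>0 < t\<close> by (simp add: abs_if mult_less_0_iff)
    ultimately show False using \<open>0 < (norm r)\<^sup>2\<close> by linarith
  qed
  then show ?thesis unfolding r_def m_def by simp
qed

lemma symmetric_matrix_top_eigenvalue:
  fixes Q :: "real^'n^'n"
  assumes sym: "transpose Q = Q"
  obtains m v where "v \<noteq> 0" "Q *v v = m *\<^sub>R v" "\<And>u. u \<bullet> (Q *v u) \<le> m * (norm u)\<^sup>2"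
proof -
  define f where "f u = u \<bullet> (Q *v u)" for u :: "real^'n"
  have "continuous_on (sphere 0 1) f"
    unfolding f_def by (intro continuous_intros linear_continuous_on bounded_linear_intros) simp
  moreover obtain b :: "real^'n" where "b \<in> Basis" using nonempty_Basis by blast
  then have "sphere (0::real^'n) 1 \<noteq> {}" by (metis norm_Basis mem_sphere_0 empty_iff)
  ultimately obtain v where v: "v \<in> sphere 0 1" "\<forall>y\<in>sphere 0 1. f y \<le> f v"
    using continuous_attains_sup[OF compact_sphere] by blast
  have bound: "f u \<le> f v * (norm u)\<^sup>2" for u
  proof (cases "u = 0")
    case True
    then show ?thesis by (simp add: f_def)
  next
    case False
    have "f ((1 / norm u) *\<^sub>R u) \<le> f v" using v False by simp
    moreover have "f u = (norm u)\<^sup>2 * f ((1 / norm u) *\<^sub>R u)"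
      using False unfolding f_def quadratic_form_scaleR by (simp add: power2_eq_square)
    ultimately show ?thesis
      using mult_left_mono[of "f ((1 / norm u) *\<^sub>R u)" "f v" "(norm u)\<^sup>2"] by (simp add: mult.commute)
  qed
  show ?thesis
  proof (rule that)
    show "v \<noteq> 0" using v(1) by auto
    show "Q *v v = f v *\<^sub>R v"
      using quadratic_form_maximizer_eigenvector[OF sym _ bound[unfolded f_def]] v(1)
      unfolding f_def by simp
    show "u \<bullet> (Q *v u) \<le> f v * (norm u)\<^sup>2" for u using bound[of u] unfolding f_def .
  qed
qed

lemma finite_eigenvalues_symmetric:
  fixes Q :: "real^'n^'n"
  assumes sym: "transpose Q = Q"
  shows "finite {l. \<exists>v. v \<noteq> 0 \<and> Q *v v = l *\<^sub>R v}"
proof -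
  define E where "E = {l. \<exists>v::real^'n. v \<noteq> 0 \<and> Q *v v = l *\<^sub>R v}"
  define ev where "ev l = (SOME v::real^'n. v \<noteq> 0 \<and> Q *v v = l *\<^sub>R v)" for l
  have ev: "ev l \<noteq> 0 \<and> Q *v ev l = l *\<^sub>R ev l" if "l \<in> E" for l
    using that unfolding E_def ev_def by (metis (mono_tags, lifting) mem_Collect_eq someI_ex)
  have orthogonal: "ev l \<bullet> ev l' = 0" if "l \<in> E" "l' \<in> E" "l \<noteq> l'" for l l'
  proof -
    have "(Q *v ev l) \<bullet> ev l' = ev l \<bullet> (Q *v ev l')" by (rule symmetric_matrix_inner[OF sym])
    then have "(l - l') * (ev l \<bullet> ev l') = 0"
      using ev[OF that(1)] ev[OF that(2)] by (simp add: algebra_simps)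
    then show ?thesis using that(3) by simp
  qed
  have "inj_on ev E"
  proof
    fix l l' assume "l \<in> E" "l' \<in> E" "ev l = ev l'"
    then have "l *\<^sub>R ev l = l' *\<^sub>R ev l" using ev by metis
    then show "l = l'" using ev[OF \<open>l \<in> E\<close>] by (simp add: scaleR_cancel_right)
  qed
  have "pairwise orthogonal (ev ` E)"
    unfolding pairwise_def orthogonal_def using orthogonal by fastforce
  moreover have "0 \<notin> ev ` E" using ev by fastforce
  ultimately have "independent (ev ` E)" by (rule pairwise_orthogonal_independent)
  then have "finite (ev ` E)" using independent_bound by blast
  then show ?thesis using finite_imageD \<open>inj_on ev E\<close> unfolding E_def by blast
qed

lemma quadratic_form_le_lambda_max:
  fixes Q :: "real^'n^'n"
  assumes sym: "transpose Q = Q"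
  shows "u \<bullet> (Q *v u) \<le> lambda_max Q * (norm u)\<^sup>2"
proof -
  obtain v m where mv: "v \<noteq> 0" "Q *v v = m *\<^sub>R v" "\<And>u. u \<bullet> (Q *v u) \<le> m * (norm u)\<^sup>2"
    using symmetric_matrix_top_eigenvalue[OF sym] by blast
  have "m \<le> lambda_max Q"
    unfolding lambda_max_def using finite_eigenvalues_symmetric[OF sym] mv by (intro Max_ge) auto
  then show ?thesis using mv(3)[of u] by (meson order_trans mult_right_mono zero_le_power2)
qed

lemma quadratic_form_bounded:
  fixes Q :: "real^'n^'n"
  obtains K where "0 < K" "\<And>v. \<bar>v \<bullet> (Q *v v)\<bar> \<le> K * (norm v)\<^sup>2"
proof -
  obtain K where K: "0 < K" "\<forall>v. norm (Q *v v) \<le> norm v * K"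
    using bounded_linear.pos_bounded[OF matrix_vector_mul_bounded_linear[of Q]] by blast
  have "\<bar>v \<bullet> (Q *v v)\<bar> \<le> K * (norm v)\<^sup>2" for v
  proof -
    have "\<bar>v \<bullet> (Q *v v)\<bar> \<le> norm v * norm (Q *v v)" by (rule Cauchy_Schwarz_ineq2)
    also have "\<dots> \<le> norm v * (norm v * K)" using K(2) by (intro mult_left_mono) auto
    finally show ?thesis by (simp add: power2_eq_square algebra_simps)
  qed
  then show ?thesis using that K(1) by blast
qed

lemma phiQ_expansion:
  fixes Q :: "real^'n^'n"
  assumes sym: "transpose Q = Q"
  shows "phiQ Q q z' = phiQ Q q z + (Q *v z + q) \<bullet> (z' - z) + (1/2) * ((z' - z) \<bullet> (Q *v (z' - z)))"
proof -
  have "z' \<bullet> (Q *v z') = z \<bullet> (Q *v z) + 2 * ((z' - z) \<bullet> (Q *v z)) + (z' - z) \<bullet> (Q *v (z' - z))"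
    using quadratic_form_add[OF sym, of z "z' - z"] by simp
  then show ?thesis
    unfolding phiQ_def by (simp add: algebra_simps inner_diff_right inner_add_left inner_commute)
qed

section \<open>The BDCA subproblem\<close>

lemma feas_eq: "feas a b p = {z. \<forall>k\<in>{..<p}. a k \<bullet> z \<le> b k}"
  unfolding feas_def by auto

lemma closed_feas: "closed (feas a b p)"
  unfolding feas_eq by (rule polyhedral_set_closed)

lemma convex_feas: "convex (feas a b p)"
  unfolding feas_eq by (rule polyhedral_set_convex)

lemma feas_segment:
  assumes "y \<in> feas a b p" "y + l *\<^sub>R d \<in> feas a b p" "0 \<le> t" "t \<le> 1"
  shows "y + (t * l) *\<^sub>R d \<in> feas a b p"
proof -
  have "y + (t * l) *\<^sub>R d = (1 - t) *\<^sub>R y + t *\<^sub>R (y + l *\<^sub>R d)"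
    by (simp add: algebra_simps)
  then show ?thesis using convexD[OF convex_feas assms(1,2)] assms(3,4) by simp
qed

lemma projection_step_optimality:
  fixes u q :: "'a::real_inner"
  assumes "convex S" "closed S" "0 < \<sigma>" "y \<in> S" "z \<in> S"
    and min: "\<forall>z\<in>S. \<sigma>/2 * (norm y)\<^sup>2 + q \<bullet> y - u \<bullet> y \<le> \<sigma>/2 * (norm z)\<^sup>2 + q \<bullet> z - u \<bullet> z"
  shows "0 \<le> (\<sigma> *\<^sub>R y + q - u) \<bullet> (z - y)"
proof -
  define w where "w = (1 / \<sigma>) *\<^sub>R (u - q)"
  have G: "\<sigma>/2 * (norm v)\<^sup>2 + q \<bullet> v - u \<bullet> v = \<sigma>/2 * (dist w v)\<^sup>2 - \<sigma>/2 * (norm w)\<^sup>2" for v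
    using \<open>0 < \<sigma>\<close>
    by (simp add: dist_norm power2_norm_eq_inner w_def inner_diff_left inner_diff_right
        inner_commute algebra_simps)
  have "\<forall>z\<in>S. dist w y \<le> dist w z"
    using min \<open>0 < \<sigma>\<close> unfolding G by (auto simp: power2_le_iff_abs_le)
  then have "(w - y) \<bullet> (z - y) \<le> 0"
    using any_closest_point_dot assms(1,2,4,5) by blast
  then have "\<sigma> * ((w - y) \<bullet> (z - y)) \<le> 0"
    using \<open>0 < \<sigma>\<close> by (simp add: mult_le_0_iff)
  moreover have "\<sigma> *\<^sub>R (w - y) = - (\<sigma> *\<^sub>R y + q - u)"
    using \<open>0 < \<sigma>\<close> by (simp add: w_def algebra_simps)
  ultimately show ?thesis by (metis inner_scaleR_left inner_minus_left neg_le_0_iff_le)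
qed

lemma active_eq: "active a b p y = {k\<in>{..<p}. a k \<bullet> y = b k}"
  unfolding active_def by auto

lemma mat_minus_vector_mult: "(mat \<sigma> - Q) *v x = \<sigma> *\<^sub>R x - Q *v (x::real^'n)"
  by (simp add: matrix_vector_mult_diff_rdistrib mat_vector_mult)

lemma dc_subproblem_optimality:
  assumes "0 < \<sigma>" "y \<in> feas a b p" "z \<in> feas a b p"
    and "\<forall>z\<in>feas a b p. dc_g \<sigma> q y - u \<bullet> y \<le> dc_g \<sigma> q z - u \<bullet> z"
  shows "0 \<le> (\<sigma> *\<^sub>R y + q - u) \<bullet> (z - y)"
  using projection_step_optimality[OF convex_feas closed_feas assms(1-3)] assms(4)
  unfolding dc_g_def by simp

lemma dc_subproblem_descent:
  fixes Q :: "real^'n^'n"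
  assumes sym: "transpose Q = Q" and sigma: "\<sigma> > max 0 (lambda_max Q)"
    and x: "x \<in> feas a b p" and y: "y \<in> feas a b p"
    and min: "\<forall>z\<in>feas a b p. dc_g \<sigma> q y - ((mat \<sigma> - Q) *v x) \<bullet> y \<le> dc_g \<sigma> q z - ((mat \<sigma> - Q) *v x) \<bullet> z"
  shows "phiQ Q q y \<le> phiQ Q q x - \<sigma>/2 * (norm (y - x))\<^sup>2"
proof -
  define d where "d = y - x"
  have eq: "\<sigma> *\<^sub>R y + q - (mat \<sigma> - Q) *v x = \<sigma> *\<^sub>R d + (Q *v x + q)"
    unfolding d_def mat_minus_vector_mult by (simp add: algebra_simps)
  have "0 \<le> (\<sigma> *\<^sub>R y + q - (mat \<sigma> - Q) *v x) \<bullet> (x - y)"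
    using dc_subproblem_optimality[OF _ y x min] sigma by simp
  then have "0 \<le> (\<sigma> *\<^sub>R d + (Q *v x + q)) \<bullet> (- d)"
    by (simp only: eq d_def minus_diff_eq)
  then have "(Q *v x + q) \<bullet> d \<le> - \<sigma> * (norm d)\<^sup>2"
    by (simp add: inner_add_left power2_norm_eq_inner)
  moreover have "d \<bullet> (Q *v d) \<le> \<sigma> * (norm d)\<^sup>2"
    using quadratic_form_le_lambda_max[OF sym, of d] sigma
    by (meson max.strict_boundedE less_imp_le mult_right_mono order_trans zero_le_power2)
  moreover have "phiQ Q q y = phiQ Q q x + (Q *v x + q) \<bullet> d + (1/2) * (d \<bullet> (Q *v d))"
    unfolding d_def by (rule phiQ_expansion[OF sym])
  ultimately show ?thesis unfolding d_def by simp
qed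

lemma dc_subproblem_normal_cone:
  fixes Q :: "real^'n^'n"
  assumes "0 < \<sigma>" and y: "y \<in> feas a b p"
    and min: "\<forall>z\<in>feas a b p. dc_g \<sigma> q y - ((mat \<sigma> - Q) *v x) \<bullet> y \<le> dc_g \<sigma> q z - ((mat \<sigma> - Q) *v x) \<bullet> z"
  shows "- (Q *v y + q) - (mat \<sigma> - Q) *v (y - x) \<in> generated_cone a (active a b p y)"
proof -
  have "- (Q *v y + q) - (mat \<sigma> - Q) *v (y - x) = - (\<sigma> *\<^sub>R y + q - (mat \<sigma> - Q) *v x)"
    unfolding mat_minus_vector_mult by (simp add: algebra_simps)
  moreover have "(- (\<sigma> *\<^sub>R y + q - (mat \<sigma> - Q) *v x)) \<bullet> (z - y) \<le> 0"
    if "\<forall>k\<in>{..<p}. a k \<bullet> z \<le> b k" for z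
    using dc_subproblem_optimality[OF \<open>0 < \<sigma>\<close> y _ min, of z] that
    unfolding inner_minus_left feas_eq by simp
  then have "- (\<sigma> *\<^sub>R y + q - (mat \<sigma> - Q) *v x) \<in> generated_cone a (active a b p y)"
    unfolding active_eq using y by (intro normal_vector_in_active_cone) (auto simp: feas_eq)
  ultimately show ?thesis by metis
qed

lemma kkt_of_variational_inequality:
  fixes Q :: "real^'n^'n"
  assumes l: "l \<in> feas a b p" and vi: "\<forall>z\<in>feas a b p. 0 \<le> (Q *v l + q) \<bullet> (z - l)"
  shows "kkt Q q a b p l"
proof -
  define A where "A = active a b p l"
  have "(- (Q *v l + q)) \<bullet> (z - l) \<le> 0" if "\<forall>k\<in>{..<p}. a k \<bullet> z \<le> b k" for z
    using vi that unfolding inner_minus_left feas_eq by simp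
  then have "- (Q *v l + q) \<in> generated_cone a A"
    unfolding A_def active_eq using l by (intro normal_vector_in_active_cone) (auto simp: feas_eq)
  then obtain m where m: "\<forall>i\<in>A. 0 \<le> m i" "- (Q *v l + q) = (\<Sum>i\<in>A. m i *\<^sub>R a i)"
    unfolding generated_cone_def by blast
  define \<mu> where "\<mu> i = (if i \<in> A then m i else 0)" for i
  have "(\<Sum>i<p. \<mu> i *\<^sub>R a i) = (\<Sum>i\<in>A. \<mu> i *\<^sub>R a i)"
    by (rule sum.mono_neutral_right) (auto simp: \<mu>_def A_def active_def)
  also have "\<dots> = - (Q *v l + q)" unfolding m(2) by (rule sum.cong) (auto simp: \<mu>_def)
  finally have "Q *v l + q + (\<Sum>i<p. \<mu> i *\<^sub>R a i) = 0" by simp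
  moreover have "0 \<le> \<mu> i" "\<mu> i * (a i \<bullet> l - b i) = 0" "a i \<bullet> l \<le> b i" if "i < p" for i
    using m(1) l that by (auto simp: \<mu>_def A_def active_def feas_def)
  ultimately show ?thesis unfolding kkt_def by blast
qed

lemma bdca_step_decomposition:
  assumes step: "bdca_step Q q a b p \<sigma> \<alpha> \<beta> x x'" and "0 < \<beta>" "\<beta> < 1"
  shows "\<exists>y t. y \<in> feas a b p \<and>
      (\<forall>z\<in>feas a b p. dc_g \<sigma> q y - ((mat \<sigma> - Q) *v x) \<bullet> y \<le> dc_g \<sigma> q z - ((mat \<sigma> - Q) *v x) \<bullet> z) \<and>
      0 \<le> t \<and> x' = y + t *\<^sub>R (y - x) \<and> x' \<in> feas a b p \<and>
      phiQ Q q x' \<le> phiQ Q q y - \<alpha> * t\<^sup>2 * (norm (y - x))\<^sup>2"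
proof -
  obtain y where y: "y \<in> feas a b p"
    "\<forall>z\<in>feas a b p. dc_g \<sigma> q y - ((mat \<sigma> - Q) *v x) \<bullet> y \<le> dc_g \<sigma> q z - ((mat \<sigma> - Q) *v x) \<bullet> z"
    and line_search: "if active a b p y \<subseteq> active a b p x then
         (\<exists>lam_bar lam0 j. lam_bar \<ge> 0 \<and> 0 \<le> lam0 \<and> lam0 \<le> lam_bar \<and>
            y + lam0 *\<^sub>R (y - x) \<in> feas a b p \<and>
            (\<forall>i<j. phiQ Q q (y + (\<beta>^i * lam0) *\<^sub>R (y - x)) >
                    phiQ Q q y - \<alpha> * (\<beta>^i * lam0)^2 * (norm (y - x))^2) \<and>
            phiQ Q q (y + (\<beta>^j * lam0) *\<^sub>R (y - x)) \<le>
                    phiQ Q q y - \<alpha> * (\<beta>^j * lam0)^2 * (norm (y - x))^2 \<and>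
            x' = y + (\<beta>^j * lam0) *\<^sub>R (y - x))
       else x' = y"
    using step unfolding bdca_step_def by blast
  show ?thesis
  proof (cases "active a b p y \<subseteq> active a b p x")
    case True
    then obtain lam0 j where l: "0 \<le> lam0" "y + lam0 *\<^sub>R (y - x) \<in> feas a b p"
       "phiQ Q q (y + (\<beta>^j * lam0) *\<^sub>R (y - x)) \<le> phiQ Q q y - \<alpha> * (\<beta>^j * lam0)\<^sup>2 * (norm (y - x))\<^sup>2"
       "x' = y + (\<beta>^j * lam0) *\<^sub>R (y - x)"
      using line_search by auto
    have "0 \<le> \<beta>^j" "\<beta>^j \<le> 1" using \<open>0 < \<beta>\<close> \<open>\<beta> < 1\<close> by (auto simp: power_le_one)
    then have "x' \<in> feas a b p" using feas_segment[OF y(1) l(2)] l(4) by simp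
    then show ?thesis using y l \<open>0 \<le> \<beta>^j\<close> by (intro exI[of _ y] exI[of _ "\<beta>^j * lam0"]) auto
  next
    case False
    then show ?thesis using y line_search by (intro exI[of _ y] exI[of _ 0]) auto
  qed
qed

section \<open>A local error bound on the faces\<close>

definition face_stationary_points ::
    "real^'n^'n \<Rightarrow> real^'n \<Rightarrow> (nat \<Rightarrow> real^'n) \<Rightarrow> (nat \<Rightarrow> real) \<Rightarrow> nat \<Rightarrow> nat set \<Rightarrow> (real^'n) set" where
  "face_stationary_points Q q a b p J =
     {z \<in> feas a b p. (\<forall>i\<in>J. a i \<bullet> z = b i) \<and> - (Q *v z + q) \<in> generated_cone a J}"

lemma phiQ_near_face_stationary_point:
  fixes Q :: "real^'n^'n"
  assumes sym: "transpose Q = Q" and z: "z \<in> face_stationary_points Q q a b p J"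
    and y: "\<forall>i\<in>J. a i \<bullet> y = b i"
  shows "phiQ Q q y = phiQ Q q z + (1/2) * ((y - z) \<bullet> (Q *v (y - z)))"
proof -
  obtain l where l: "- (Q *v z + q) = (\<Sum>i\<in>J. l i *\<^sub>R a i)" and zJ: "\<forall>i\<in>J. a i \<bullet> z = b i"
    using z unfolding face_stationary_points_def generated_cone_def by blast
  have "(- (Q *v z + q)) \<bullet> (y - z) = (\<Sum>i\<in>J. l i * (a i \<bullet> (y - z)))"
    unfolding l by (simp add: inner_sum_left)
  also have "\<dots> = 0" using zJ y by (intro sum.neutral) (simp add: inner_diff_right)
  finally have "(Q *v z + q) \<bullet> (y - z) = 0" by (simp only: inner_minus_left neg_equal_0_iff_equal)
  then show ?thesis using phiQ_expansion[OF sym, of q y z] by simp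
qed

lemma phiQ_constant_on_face_stationary_points:
  fixes Q :: "real^'n^'n"
  assumes sym: "transpose Q = Q"
    and z: "z \<in> face_stationary_points Q q a b p J" and z': "z' \<in> face_stationary_points Q q a b p J"
  shows "phiQ Q q z = phiQ Q q z'"
proof -
  have on_face: "\<forall>i\<in>J. a i \<bullet> z = b i" "\<forall>i\<in>J. a i \<bullet> z' = b i"
    using z z' unfolding face_stationary_points_def by auto
  note phiQ_near_face_stationary_point[OF sym z on_face(2)]
    phiQ_near_face_stationary_point[OF sym z' on_face(1)]
  moreover have "(z - z') \<bullet> (Q *v (z - z')) = (z' - z) \<bullet> (Q *v (z' - z))"
    using quadratic_form_scaleR[of "-1" "z' - z" Q] by simp
  ultimately show ?thesis by linarith
qed

lemma finite_phiQ_face_stationary_values: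
  fixes Q :: "real^'n^'n"
  assumes sym: "transpose Q = Q"
  shows "finite (phiQ Q q ` (\<Union>J\<in>Pow {..<p}. face_stationary_points Q q a b p J))"
proof (rule finite_subset)
  let ?pick = "\<lambda>J. phiQ Q q (SOME z. z \<in> face_stationary_points Q q a b p J)"
  show "phiQ Q q ` (\<Union>J\<in>Pow {..<p}. face_stationary_points Q q a b p J) \<subseteq> ?pick ` Pow {..<p}"
  proof
    fix v assume "v \<in> phiQ Q q ` (\<Union>J\<in>Pow {..<p}. face_stationary_points Q q a b p J)"
    then obtain J z where J: "J \<in> Pow {..<p}" and z: "z \<in> face_stationary_points Q q a b p J"
      and v: "v = phiQ Q q z"
      by blast
    have "(SOME z. z \<in> face_stationary_points Q q a b p J) \<in> face_stationary_points Q q a b p J"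
      using z by (rule someI)
    then have "v = ?pick J" using phiQ_constant_on_face_stationary_points[OF sym z] v by simp
    then show "v \<in> ?pick ` Pow {..<p}" using J by blast
  qed
qed simp

definition local_error_bound ::
    "real^'n^'n \<Rightarrow> real^'n \<Rightarrow> (nat \<Rightarrow> real^'n) \<Rightarrow> (nat \<Rightarrow> real) \<Rightarrow> nat \<Rightarrow> nat set \<Rightarrow> real \<Rightarrow> real \<Rightarrow> bool" where
  "local_error_bound Q q a b p J \<delta> \<tau> \<longleftrightarrow>
     (\<forall>y r. y \<in> feas a b p \<longrightarrow> (\<forall>i\<in>J. a i \<bullet> y = b i) \<longrightarrow>
        - (Q *v y + q) - r \<in> generated_cone a J \<longrightarrow> norm r < \<delta> \<longrightarrow>
        (\<exists>z\<in>face_stationary_points Q q a b p J. norm (y - z) \<le> \<tau> * norm r))"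

lemma local_error_bound_mono:
  assumes "local_error_bound Q q a b p J \<delta> \<tau>" "\<delta>' \<le> \<delta>" "\<tau> \<le> \<tau>'"
  shows "local_error_bound Q q a b p J \<delta>' \<tau>'"
  unfolding local_error_bound_def
proof (intro allI impI)
  fix y r assume "y \<in> feas a b p" "\<forall>i\<in>J. a i \<bullet> y = b i" "- (Q *v y + q) - r \<in> generated_cone a J"
    "norm r < \<delta>'"
  then obtain z where "z \<in> face_stationary_points Q q a b p J" "norm (y - z) \<le> \<tau> * norm r"
    using assms(1,2) unfolding local_error_bound_def by force
  moreover have "\<tau> * norm r \<le> \<tau>' * norm r" using assms(3) by (simp add: mult_right_mono)
  ultimately show "\<exists>z\<in>face_stationary_points Q q a b p J. norm (y - z) \<le> \<tau>' * norm r"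
    by force
qed

text \<open>The stationary points of face \<open>J\<close> solve a finite linear system, indexed by the rows of
  the feasible set (\<open>Inl\<close>), the active rows read as reverse inequalities (\<open>Inr \<circ> Inl\<close>), and
  the halfspaces \<open>H\<close> describing the cone generated by the active rows (\<open>Inr \<circ> Inr\<close>).\<close>

lemma face_stationary_points_linear_system:
  fixes Q :: "real^'n^'n"
  assumes sym: "transpose Q = Q" and J: "J \<subseteq> {..<p}"
  obtains I :: "(nat + nat + (real^'n) set) set" and cs es G where "finite I" "0 \<le> G"
    "\<forall>z. z \<in> face_stationary_points Q q a b p J \<longleftrightarrow> (\<forall>k\<in>I. cs k \<bullet> z \<le> es k)"
    "\<forall>y r. y \<in> feas a b p \<longrightarrow> (\<forall>i\<in>J. a i \<bullet> y = b i) \<longrightarrow>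
       - (Q *v y + q) - r \<in> generated_cone a J \<longrightarrow> (\<forall>k\<in>I. cs k \<bullet> y \<le> es k + G * norm r)"
proof -
  have "finite J" using J finite_subset by blast
  obtain H :: "(real^'n) set set" and g \<beta> where H: "finite H"
    and cone: "generated_cone a J = {v. \<forall>h\<in>H. g h \<bullet> v \<le> \<beta> h}"
    by (rule polyhedron_as_inequalities[OF polyhedron_generated_cone[OF \<open>finite J\<close>]])
  define cs :: "nat + nat + (real^'n) set \<Rightarrow> real^'n" where
    "cs = case_sum a (case_sum (\<lambda>i. - a i) (\<lambda>h. - (Q *v g h)))"
  define es :: "nat + nat + (real^'n) set \<Rightarrow> real" where
    "es = case_sum b (case_sum (\<lambda>i. - b i) (\<lambda>h. \<beta> h + g h \<bullet> q))"
  define I where "I = Inl ` {..<p} \<union> Inr ` (Inl ` J \<union> Inr ` H)"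
  have "finite I" unfolding I_def using \<open>finite J\<close> H by simp
  have system: "(\<forall>k\<in>I. cs k \<bullet> z \<le> es k + s) \<longleftrightarrow>
      (\<forall>i<p. a i \<bullet> z \<le> b i + s) \<and> (\<forall>i\<in>J. - (a i \<bullet> z) \<le> - b i + s) \<and>
      (\<forall>h\<in>H. - (g h \<bullet> (Q *v z)) \<le> \<beta> h + g h \<bullet> q + s)" for z s
  proof -
    have "(Q *v g h) \<bullet> z = g h \<bullet> (Q *v z)" for h by (rule symmetric_matrix_inner[OF sym])
    moreover have "(\<forall>k\<in>I. P k) \<longleftrightarrow>
        (\<forall>i<p. P (Inl i)) \<and> (\<forall>i\<in>J. P (Inr (Inl i))) \<and> (\<forall>h\<in>H. P (Inr (Inr h)))" for P
      unfolding I_def by blast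
    ultimately show ?thesis by (simp add: cs_def es_def algebra_simps)
  qed
  have stationary: "(\<forall>k\<in>I. cs k \<bullet> z \<le> es k) \<longleftrightarrow> z \<in> face_stationary_points Q q a b p J" for z
  proof -
    have "(\<forall>h\<in>H. - (g h \<bullet> (Q *v z)) \<le> \<beta> h + g h \<bullet> q) \<longleftrightarrow> - (Q *v z + q) \<in> generated_cone a J"
      unfolding cone by (auto simp: inner_add_right algebra_simps)
    then show ?thesis
      using system[of z 0] J unfolding face_stationary_points_def feas_def by (auto intro: antisym simp: subset_iff)
  qed
  define G where "G = (\<Sum>h\<in>H. norm (g h))"
  have "0 \<le> G" unfolding G_def by (simp add: sum_nonneg)
  have residual: "\<forall>k\<in>I. cs k \<bullet> y \<le> es k + G * norm r"
    if y: "y \<in> feas a b p" "\<forall>i\<in>J. a i \<bullet> y = b i" "- (Q *v y + q) - r \<in> generated_cone a J" for y r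
  proof -
    have "- (g h \<bullet> (Q *v y)) \<le> \<beta> h + g h \<bullet> q + G * norm r" if "h \<in> H" for h
    proof -
      have "g h \<bullet> (- (Q *v y + q) - r) \<le> \<beta> h" using y(3) that unfolding cone by blast
      moreover have "g h \<bullet> r \<le> G * norm r"
        using norm_cauchy_schwarz[of "g h" r] member_le_sum[OF that _ H, of "\<lambda>h. norm (g h)"]
        by (simp add: G_def) (meson mult_right_mono norm_ge_zero order_trans)
      ultimately show ?thesis by (simp add: inner_diff_right inner_add_right)
    qed
    then show ?thesis
      using y(1,2) \<open>0 \<le> G\<close> unfolding system feas_def by (auto intro: add_increasing2)
  qed
  then show ?thesis using that \<open>finite I\<close> \<open>0 \<le> G\<close> stationary by blast
qed

lemma local_error_bound_exists:
  fixes Q :: "real^'n^'n"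
  assumes sym: "transpose Q = Q" and J: "J \<subseteq> {..<p}"
  shows "\<exists>\<delta>>0. \<exists>\<tau>\<ge>0. local_error_bound Q q a b p J \<delta> \<tau>"
proof -
  obtain I :: "(nat + nat + (real^'n) set) set" and cs es G where "finite I" "0 \<le> G"
    and stationary: "\<forall>z. z \<in> face_stationary_points Q q a b p J \<longleftrightarrow> (\<forall>k\<in>I. cs k \<bullet> z \<le> es k)"
    and residual: "\<forall>y r. y \<in> feas a b p \<longrightarrow> (\<forall>i\<in>J. a i \<bullet> y = b i) \<longrightarrow>
       - (Q *v y + q) - r \<in> generated_cone a J \<longrightarrow> (\<forall>k\<in>I. cs k \<bullet> y \<le> es k + G * norm r)"
    by (rule face_stationary_points_linear_system[OF sym J])
  obtain \<delta> \<tau> where "0 < \<delta>" "0 \<le> \<tau>" and hoffman: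
    "\<And>z s. 0 \<le> s \<Longrightarrow> s < \<delta> \<Longrightarrow> \<forall>k\<in>I. cs k \<bullet> z \<le> es k + s \<Longrightarrow>
       \<exists>z'. (\<forall>k\<in>I. cs k \<bullet> z' \<le> es k) \<and> norm (z - z') \<le> \<tau> * s"
    using hoffman_local_bound[OF \<open>finite I\<close>] by metis
  have "local_error_bound Q q a b p J (\<delta> / (G + 1)) (\<tau> * G)"
    unfolding local_error_bound_def
  proof (intro allI impI)
    fix y r assume y: "y \<in> feas a b p" "\<forall>i\<in>J. a i \<bullet> y = b i" "- (Q *v y + q) - r \<in> generated_cone a J"
      and r: "norm r < \<delta> / (G + 1)"
    have "G * norm r < \<delta>"
    proof -
      have "G * norm r \<le> G * (\<delta> / (G + 1))" using r \<open>0 \<le> G\<close> by (intro mult_left_mono) auto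
      also have "\<dots> < \<delta>" using \<open>0 < \<delta>\<close> \<open>0 \<le> G\<close> by (simp add: divide_less_eq)
      finally show ?thesis .
    qed
    then show "\<exists>z\<in>face_stationary_points Q q a b p J. norm (y - z) \<le> \<tau> * G * norm r"
      using hoffman[of "G * norm r" y] residual y \<open>0 \<le> G\<close> stationary by (auto simp: mult.assoc)
  qed
  then show ?thesis using \<open>0 < \<delta>\<close> \<open>0 \<le> \<tau>\<close> \<open>0 \<le> G\<close> by (intro exI conjI) auto
qed

lemma finite_family_uniform_constants:
  fixes P :: "'i \<Rightarrow> real \<Rightarrow> real \<Rightarrow> bool"
  assumes "finite A" "\<forall>J\<in>A. \<exists>\<delta>>0. \<exists>\<tau>\<ge>0. P J \<delta> \<tau>"
    and mono: "\<And>J \<delta> \<delta>' \<tau> \<tau>'. P J \<delta> \<tau> \<Longrightarrow> \<delta>' \<le> \<delta> \<Longrightarrow> \<tau> \<le> \<tau>' \<Longrightarrow> P J \<delta>' \<tau>'"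
  shows "\<exists>\<delta>>0. \<exists>\<tau>\<ge>0. \<forall>J\<in>A. P J \<delta> \<tau>"
  using assms(1,2)
proof (induction A rule: finite_induct)
  case empty
  show ?case using zero_less_one order_refl by blast
next
  case (insert J A)
  obtain \<delta>1 \<tau>1 where 1: "0 < \<delta>1" "0 \<le> \<tau>1" "\<forall>J'\<in>A. P J' \<delta>1 \<tau>1" using insert by auto
  obtain \<delta>2 \<tau>2 where 2: "0 < \<delta>2" "0 \<le> \<tau>2" "P J \<delta>2 \<tau>2" using insert.prems by auto
  have "\<forall>J'\<in>insert J A. P J' (min \<delta>1 \<delta>2) (max \<tau>1 \<tau>2)"
    using 1(3) 2(3) mono by (metis insert_iff max.cobounded1 max.cobounded2 min.cobounded1 min.cobounded2)
  moreover have "0 < min \<delta>1 \<delta>2" "0 \<le> max \<tau>1 \<tau>2" using 1 2 by auto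
  ultimately show ?case by blast
qed

lemma local_error_bound_uniform:
  fixes Q :: "real^'n^'n"
  assumes "transpose Q = Q"
  shows "\<exists>\<delta>>0. \<exists>\<tau>\<ge>0. \<forall>J\<in>Pow {..<p}. local_error_bound Q q a b p J \<delta> \<tau>"
  using local_error_bound_exists[OF assms] local_error_bound_mono
  by (intro finite_family_uniform_constants) auto

section \<open>Rates of convergence of sequences\<close>

lemma eventually_close_to_limit_in_finite_set:
  fixes f g :: "nat \<Rightarrow> real"
  assumes "finite V" "f \<longlonglongrightarrow> L" "g \<longlonglongrightarrow> 0"
    and close: "eventually (\<lambda>k. \<exists>v\<in>V. \<bar>f k - v\<bar> \<le> g k) sequentially"
  shows "eventually (\<lambda>k. \<bar>f k - L\<bar> \<le> g k) sequentially"
proof -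
  define \<eta> where "\<eta> = Min (insert 1 ((\<lambda>v. \<bar>v - L\<bar>) ` (V - {L})))"
  have "0 < \<eta>" unfolding \<eta>_def using assms(1) by (auto simp: Min_gr_iff)
  have gap: "\<eta> \<le> \<bar>v - L\<bar>" if "v \<in> V" "v \<noteq> L" for v
    unfolding \<eta>_def using assms(1) that by (intro Min_le) auto
  have "eventually (\<lambda>k. \<bar>f k - L\<bar> < \<eta> / 2) sequentially"
    using tendstoD[OF assms(2), of "\<eta> / 2"] \<open>0 < \<eta>\<close> by (simp add: dist_real_def)
  moreover have "eventually (\<lambda>k. g k < \<eta> / 2) sequentially"
    using order_tendstoD(2)[OF assms(3), of "\<eta> / 2"] \<open>0 < \<eta>\<close> by simp
  ultimately show ?thesis using close
  proof eventually_elim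
    case (elim k)
    then obtain v where "v \<in> V" "\<bar>f k - v\<bar> \<le> g k" by blast
    moreover have "v = L"
    proof (rule ccontr)
      assume "v \<noteq> L"
      then have "\<eta> \<le> \<bar>v - L\<bar>" by (rule gap[OF \<open>v \<in> V\<close>])
      then show False using elim calculation(2) by arith
    qed
    ultimately show ?case by simp
  qed
qed

lemma geometric_decay_of_recursion:
  fixes e :: "nat \<Rightarrow> real"
  assumes "0 \<le> c" "c / (1 + c) \<le> \<nu>" and nonneg: "\<And>k. 0 \<le> e k"
    and recursion: "\<And>k. K \<le> k \<Longrightarrow> e (Suc k) \<le> c * (e k - e (Suc k))"
  shows "K \<le> k \<Longrightarrow> e k \<le> \<nu> ^ (k - K) * e K"
proof (induction k rule: dec_induct)
  case base
  show ?case by simp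
next
  case (step k)
  have "e (Suc k) * (1 + c) \<le> c * e k" using recursion[OF step.hyps(1)] by (simp add: algebra_simps)
  then have "e (Suc k) \<le> c / (1 + c) * e k" using assms(1) by (simp add: field_simps)
  also have "\<dots> \<le> \<nu> * e k" using assms(2) nonneg by (intro mult_right_mono) auto
  also have "\<dots> \<le> \<nu> * (\<nu> ^ (k - K) * e K)"
    using step.IH assms(1,2) by (intro mult_left_mono) (auto intro: order_trans[rotated])
  also have "\<dots> = \<nu> ^ (Suc k - K) * e K" using step.hyps(1) by (simp add: Suc_diff_le)
  finally show ?case .
qed

lemma geometric_steps_tail_bound:
  fixes x :: "nat \<Rightarrow> 'a::real_normed_vector"
  assumes "0 < \<theta>" "\<theta> < 1" and steps: "\<forall>k\<ge>K. norm (x (Suc k) - x k) \<le> A * \<theta> ^ k"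
    and "K \<le> j" "j \<le> m"
  shows "norm (x m - x j) \<le> A * \<theta> ^ j / (1 - \<theta>)"
proof -
  have "0 \<le> A * \<theta> ^ K" using steps norm_ge_zero order_trans by blast
  then have "0 \<le> A" using zero_less_power[OF \<open>0 < \<theta>\<close>, of K] by (simp add: zero_le_mult_iff)
  have partial: "norm (x (j + n) - x j) \<le> A * \<theta> ^ j * (\<Sum>i<n. \<theta> ^ i)" for n
  proof (induction n)
    case 0
    show ?case by simp
  next
    case (Suc n)
    have "norm (x (j + Suc n) - x j) \<le> norm (x (Suc (j + n)) - x (j + n)) + norm (x (j + n) - x j)"
      using norm_triangle_ineq[of "x (Suc (j + n)) - x (j + n)" "x (j + n) - x j"] by simp
    also have "\<dots> \<le> A * \<theta> ^ (j + n) + A * \<theta> ^ j * (\<Sum>i<n. \<theta> ^ i)"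
      using steps \<open>K \<le> j\<close> Suc.IH by (intro add_mono) auto
    also have "\<dots> = A * \<theta> ^ j * (\<Sum>i<Suc n. \<theta> ^ i)" by (simp add: power_add algebra_simps)
    finally show ?case .
  qed
  obtain n where m: "m = j + n" using le_Suc_ex[OF \<open>j \<le> m\<close>] by blast
  have "(\<Sum>i<n. \<theta> ^ i) = (1 - \<theta> ^ n) / (1 - \<theta>)" using sum_gp_strict[of \<theta> n] \<open>\<theta> < 1\<close> by simp
  also have "\<dots> \<le> 1 / (1 - \<theta>)" using \<open>0 < \<theta>\<close> \<open>\<theta> < 1\<close> by (intro divide_right_mono) auto
  finally have "A * \<theta> ^ j * (\<Sum>i<n. \<theta> ^ i) \<le> A * \<theta> ^ j * (1 / (1 - \<theta>))"
    using \<open>0 \<le> A\<close> \<open>0 < \<theta>\<close> by (intro mult_left_mono) auto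
  then show ?thesis using partial[of n] unfolding m by simp
qed

lemma convergent_geometric_steps:
  fixes x :: "nat \<Rightarrow> 'a::banach"
  assumes "0 < \<theta>" "\<theta> < 1" and steps: "\<And>k. K \<le> k \<Longrightarrow> norm (x (Suc k) - x k) \<le> A * \<theta> ^ k"
  obtains l where "x \<longlonglongrightarrow> l" "\<And>k. K \<le> k \<Longrightarrow> norm (x k - l) \<le> A * \<theta> ^ k / (1 - \<theta>)"
proof -
  have "\<forall>k\<ge>K. norm (x (Suc k) - x k) \<le> A * \<theta> ^ k" using steps by blast
  note tail = geometric_steps_tail_bound[OF \<open>0 < \<theta>\<close> \<open>\<theta> < 1\<close> this]
  have "Cauchy x"
  proof (rule CauchyI)
    fix e :: real assume "0 < e"
    have "(\<lambda>N. A * \<theta> ^ N / (1 - \<theta>)) \<longlonglongrightarrow> A * 0 / (1 - \<theta>)"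
      using \<open>0 < \<theta>\<close> \<open>\<theta> < 1\<close> by (intro tendsto_intros LIMSEQ_power_zero) auto
    then have "eventually (\<lambda>N. A * \<theta> ^ N / (1 - \<theta>) < e / 2) sequentially"
      using \<open>0 < e\<close> by (intro order_tendstoD(2)) auto
    then obtain N0 where N0: "\<And>N. N0 \<le> N \<Longrightarrow> A * \<theta> ^ N / (1 - \<theta>) < e / 2"
      unfolding eventually_sequentially by blast
    define N where "N = max N0 K"
    have N: "A * \<theta> ^ N / (1 - \<theta>) < e / 2" "K \<le> N" using N0[of N] by (auto simp: N_def)
    show "\<exists>M. \<forall>m\<ge>M. \<forall>n\<ge>M. norm (x m - x n) < e"
    proof (intro exI[of _ N] allI impI)
      fix m n assume "N \<le> m" "N \<le> n"
      have "norm (x m - x n) \<le> norm (x m - x N) + norm (x n - x N)"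
        using norm_triangle_ineq4[of "x m - x N" "x n - x N"] by simp
      also have "\<dots> < e" using tail[OF N(2) \<open>N \<le> m\<close>] tail[OF N(2) \<open>N \<le> n\<close>] N(1) by linarith
      finally show "norm (x m - x n) < e" .
    qed
  qed
  then obtain l where l: "x \<longlonglongrightarrow> l" using Cauchy_convergent_iff convergent_def by blast
  have "norm (x k - l) \<le> A * \<theta> ^ k / (1 - \<theta>)" if "K \<le> k" for k
  proof -
    have "(\<lambda>m. norm (x m - x k)) \<longlonglongrightarrow> norm (l - x k)" by (intro tendsto_intros l)
    then have "norm (l - x k) \<le> A * \<theta> ^ k / (1 - \<theta>)"
      by (rule Lim_bounded) (use tail[OF that] in blast)
    then show ?thesis by (simp add: norm_minus_commute)
  qed
  then show ?thesis using that l by blast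
qed

section \<open>Trajectories of BDCA\<close>

text \<open>\<open>y k\<close> is the solution of the subproblem at \<open>x k\<close> and \<open>t k\<close> the accepted step size
  \<open>\<lambda>\<^sub>k\<close>; the direction is \<open>d\<^sub>k = y k - x k\<close>.\<close>

locale bdca_trajectory =
  fixes Q :: "real^'n^'n" and q :: "real^'n" and a :: "nat \<Rightarrow> real^'n" and b :: "nat \<Rightarrow> real"
    and p :: nat and \<sigma> \<alpha> :: real and x y :: "nat \<Rightarrow> real^'n" and t :: "nat \<Rightarrow> real"
  assumes symmetric: "transpose Q = Q"
    and sigma: "\<sigma> > max 0 (lambda_max Q)" and alpha: "\<alpha> > 0"
    and solvable: "\<exists>xs\<in>feas a b p. \<forall>z\<in>feas a b p. phiQ Q q xs \<le> phiQ Q q z"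
    and x_feas: "\<And>k. x k \<in> feas a b p"
    and y_feas: "\<And>k. y k \<in> feas a b p"
    and y_min: "\<And>k. \<forall>z\<in>feas a b p.
      dc_g \<sigma> q (y k) - ((mat \<sigma> - Q) *v x k) \<bullet> y k \<le> dc_g \<sigma> q z - ((mat \<sigma> - Q) *v x k) \<bullet> z"
    and t_nonneg: "\<And>k. 0 \<le> t k"
    and x_Suc: "\<And>k. x (Suc k) = y k + t k *\<^sub>R (y k - x k)"
    and armijo: "\<And>k. phiQ Q q (x (Suc k)) \<le> phiQ Q q (y k) - \<alpha> * (t k)\<^sup>2 * (norm (y k - x k))\<^sup>2"
begin

lemma sigma_pos: "0 < \<sigma>"
  using sigma by simp

lemma phi_y_le: "phiQ Q q (y k) \<le> phiQ Q q (x k) - \<sigma>/2 * (norm (y k - x k))\<^sup>2"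
  by (rule dc_subproblem_descent[OF symmetric sigma x_feas y_feas y_min])

lemma phi_x_Suc_le_phi_y: "phiQ Q q (x (Suc k)) \<le> phiQ Q q (y k)"
proof -
  have "0 \<le> \<alpha> * (t k)\<^sup>2 * (norm (y k - x k))\<^sup>2" using alpha by simp
  then show ?thesis using armijo[of k] by linarith
qed

lemma phi_y_le_phi_x: "phiQ Q q (y k) \<le> phiQ Q q (x k)"
proof -
  have "0 \<le> \<sigma>/2 * (norm (y k - x k))\<^sup>2" using sigma_pos by simp
  then show ?thesis using phi_y_le[of k] by linarith
qed

lemma phi_decrease:
  "phiQ Q q (x (Suc k)) \<le> phiQ Q q (x k) - (\<sigma>/2 + \<alpha> * (t k)\<^sup>2) * (norm (y k - x k))\<^sup>2"
  using armijo[of k] phi_y_le[of k] by (simp add: algebra_simps)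

lemma phi_x_decseq: "decseq (\<lambda>k. phiQ Q q (x k))"
proof (rule decseq_SucI)
  fix k
  have "0 \<le> (\<sigma>/2 + \<alpha> * (t k)\<^sup>2) * (norm (y k - x k))\<^sup>2"
    using sigma_pos alpha by (intro mult_nonneg_nonneg add_nonneg_nonneg) auto
  then show "phiQ Q q (x (Suc k)) \<le> phiQ Q q (x k)" using phi_decrease[of k] by linarith
qed

lemma phi_x_converges: "\<exists>L. (\<lambda>k. phiQ Q q (x k)) \<longlonglongrightarrow> L"
proof -
  obtain xs where "\<forall>z\<in>feas a b p. phiQ Q q xs \<le> phiQ Q q z" using solvable by blast
  then have "\<forall>k. phiQ Q q xs \<le> phiQ Q q (x k)" using x_feas by blast
  then show ?thesis using decseq_convergent[OF phi_x_decseq] by blast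
qed

context
  fixes L :: real
  assumes phi_lim: "(\<lambda>k. phiQ Q q (x k)) \<longlonglongrightarrow> L"
begin

lemma phi_x_ge: "L \<le> phiQ Q q (x k)"
  using decseq_ge[OF phi_x_decseq phi_lim] .

lemma step_sq_le: "(norm (y k - x k))\<^sup>2 \<le> 2/\<sigma> * (phiQ Q q (x k) - phiQ Q q (x (Suc k)))"
proof -
  have "0 \<le> \<alpha> * (t k)\<^sup>2 * (norm (y k - x k))\<^sup>2" using alpha by simp
  then have "\<sigma>/2 * (norm (y k - x k))\<^sup>2 \<le> phiQ Q q (x k) - phiQ Q q (x (Suc k))"
    using phi_decrease[of k] by (simp add: algebra_simps)
  then show ?thesis using sigma_pos by (simp add: field_simps)
qed

lemma step_sq_tendsto_zero: "(\<lambda>k. (norm (y k - x k))\<^sup>2) \<longlonglongrightarrow> 0"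
proof (rule tendsto_sandwich[of "\<lambda>_. 0" _ _ "\<lambda>k. 2/\<sigma> * (phiQ Q q (x k) - phiQ Q q (x (Suc k)))"])
  have "(\<lambda>k. phiQ Q q (x k) - phiQ Q q (x (Suc k))) \<longlonglongrightarrow> L - L"
    by (intro tendsto_diff phi_lim LIMSEQ_Suc[OF phi_lim])
  then show "(\<lambda>k. 2/\<sigma> * (phiQ Q q (x k) - phiQ Q q (x (Suc k)))) \<longlonglongrightarrow> 0"
    using tendsto_mult_right_zero[of _ sequentially "2/\<sigma>"] by (simp only: diff_self)
  show "\<forall>\<^sub>F k in sequentially. 0 \<le> (norm (y k - x k))\<^sup>2" by simp
  show "\<forall>\<^sub>F k in sequentially. (norm (y k - x k))\<^sup>2 \<le> 2/\<sigma> * (phiQ Q q (x k) - phiQ Q q (x (Suc k)))"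
    using step_sq_le by simp
qed simp

lemma step_tendsto_zero: "(\<lambda>k. y k - x k) \<longlonglongrightarrow> 0"
proof -
  have "(\<lambda>k. sqrt ((norm (y k - x k))\<^sup>2)) \<longlonglongrightarrow> sqrt 0"
    by (intro tendsto_real_sqrt step_sq_tendsto_zero)
  then have "(\<lambda>k. norm (y k - x k)) \<longlonglongrightarrow> 0" by simp
  then show ?thesis by (simp only: tendsto_norm_zero_iff)
qed

lemma phi_y_tendsto: "(\<lambda>k. phiQ Q q (y k)) \<longlonglongrightarrow> L"
proof (rule tendsto_sandwich[of "\<lambda>k. phiQ Q q (x (Suc k))" _ _ "\<lambda>k. phiQ Q q (x k)"])
  show "\<forall>\<^sub>F k in sequentially. phiQ Q q (x (Suc k)) \<le> phiQ Q q (y k)"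
    using phi_x_Suc_le_phi_y by simp
  show "\<forall>\<^sub>F k in sequentially. phiQ Q q (y k) \<le> phiQ Q q (x k)"
    using phi_y_le_phi_x by simp
qed (rule LIMSEQ_Suc[OF phi_lim], rule phi_lim)

lemma phi_y_near_stationary_value:
  obtains c where "0 \<le> c"
    "eventually (\<lambda>k. \<exists>v\<in>phiQ Q q ` (\<Union>J\<in>Pow {..<p}. face_stationary_points Q q a b p J).
       \<bar>phiQ Q q (y k) - v\<bar> \<le> c * (norm (y k - x k))\<^sup>2) sequentially"
proof -
  define M where "M = mat \<sigma> - Q"
  obtain \<delta> \<tau> where "0 < \<delta>" "0 \<le> \<tau>"
    and error_bound: "\<And>J. J \<in> Pow {..<p} \<Longrightarrow> local_error_bound Q q a b p J \<delta> \<tau>"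
    using local_error_bound_uniform[OF symmetric] by blast
  obtain KM where KM: "0 < KM" "\<And>v. norm (M *v v) \<le> norm v * KM"
    using bounded_linear.pos_bounded[OF matrix_vector_mul_bounded_linear[of M]] by blast
  obtain KQ where KQ: "0 < KQ" "\<And>v. \<bar>v \<bullet> (Q *v v)\<bar> \<le> KQ * (norm v)\<^sup>2"
    using quadratic_form_bounded[of Q] by blast
  define c where "c = KQ / 2 * (\<tau> * KM)\<^sup>2"
  have "eventually (\<lambda>k. norm (y k - x k) < \<delta> / KM) sequentially"
    using tendsto_norm_zero[OF step_tendsto_zero] \<open>0 < \<delta>\<close> KM(1) by (intro order_tendstoD(2)) auto
  then have "eventually (\<lambda>k. \<exists>v\<in>phiQ Q q ` (\<Union>J\<in>Pow {..<p}. face_stationary_points Q q a b p J).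
       \<bar>phiQ Q q (y k) - v\<bar> \<le> c * (norm (y k - x k))\<^sup>2) sequentially"
  proof eventually_elim
    case (elim k)
    define J where "J = active a b p (y k)"
    define r where "r = M *v (y k - x k)"
    have "J \<in> Pow {..<p}" "\<forall>i\<in>J. a i \<bullet> y k = b i" unfolding J_def active_def by auto
    have "norm r \<le> norm (y k - x k) * KM" unfolding r_def by (rule KM(2))
    moreover have "norm (y k - x k) * KM < \<delta>" using elim KM(1) by (simp add: pos_less_divide_eq)
    ultimately have "norm r < \<delta>" by linarith
    moreover have "- (Q *v y k + q) - r \<in> generated_cone a J"
      unfolding J_def r_def M_def by (rule dc_subproblem_normal_cone[OF sigma_pos y_feas y_min])
    ultimately obtain z where z: "z \<in> face_stationary_points Q q a b p J"
      and "norm (y k - z) \<le> \<tau> * norm r"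
      using error_bound[OF \<open>J \<in> Pow {..<p}\<close>] y_feas \<open>\<forall>i\<in>J. a i \<bullet> y k = b i\<close>
      unfolding local_error_bound_def by blast
    then have yz: "norm (y k - z) \<le> \<tau> * KM * norm (y k - x k)"
      using \<open>norm r \<le> norm (y k - x k) * KM\<close> \<open>0 \<le> \<tau>\<close>
      by (smt (verit) mult.assoc mult.commute mult_left_mono)
    have "\<bar>phiQ Q q (y k) - phiQ Q q z\<bar> = \<bar>(y k - z) \<bullet> (Q *v (y k - z))\<bar> / 2"
      using phiQ_near_face_stationary_point[OF symmetric z \<open>\<forall>i\<in>J. a i \<bullet> y k = b i\<close>] by simp
    also have "\<dots> \<le> KQ * (norm (y k - z))\<^sup>2 / 2" using KQ(2) by (simp add: divide_right_mono)
    also have "\<dots> \<le> KQ * (\<tau> * KM * norm (y k - x k))\<^sup>2 / 2"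
      using yz KQ(1) by (intro divide_right_mono mult_left_mono power_mono) auto
    also have "\<dots> = c * (norm (y k - x k))\<^sup>2" by (simp add: c_def power_mult_distrib)
    finally show ?case using z \<open>J \<in> Pow {..<p}\<close> by blast
  qed
  moreover have "0 \<le> c" unfolding c_def using KQ(1) by simp
  ultimately show ?thesis using that by blast
qed

lemma phi_y_error_bound:
  obtains c where "0 \<le> c"
    "eventually (\<lambda>k. phiQ Q q (y k) - L \<le> c * (norm (y k - x k))\<^sup>2) sequentially"
proof -
  obtain c where "0 \<le> c"
    and near: "eventually (\<lambda>k. \<exists>v\<in>phiQ Q q ` (\<Union>J\<in>Pow {..<p}. face_stationary_points Q q a b p J).
       \<bar>phiQ Q q (y k) - v\<bar> \<le> c * (norm (y k - x k))\<^sup>2) sequentially"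
    by (rule phi_y_near_stationary_value)
  have "(\<lambda>k. c * (norm (y k - x k))\<^sup>2) \<longlonglongrightarrow> c * 0"
    by (intro tendsto_mult tendsto_const step_sq_tendsto_zero)
  then have "eventually (\<lambda>k. \<bar>phiQ Q q (y k) - L\<bar> \<le> c * (norm (y k - x k))\<^sup>2) sequentially"
    using eventually_close_to_limit_in_finite_set[OF finite_phiQ_face_stationary_values[OF symmetric]
        phi_y_tendsto _ near]
    by simp
  then have "eventually (\<lambda>k. phiQ Q q (y k) - L \<le> c * (norm (y k - x k))\<^sup>2) sequentially"
    by (rule eventually_mono) linarith
  then show ?thesis using that \<open>0 \<le> c\<close> by blast
qed

lemma phi_x_Q_linear:
  obtains \<nu> K where "0 < \<nu>" "\<nu> < 1"
    "\<And>k. K \<le> k \<Longrightarrow> phiQ Q q (x k) - L \<le> \<nu> ^ (k - K) * (phiQ Q q (x K) - L)"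
proof -
  obtain c where "0 \<le> c"
    and "eventually (\<lambda>k. phiQ Q q (y k) - L \<le> c * (norm (y k - x k))\<^sup>2) sequentially"
    by (rule phi_y_error_bound)
  then obtain K where K: "\<And>k. K \<le> k \<Longrightarrow> phiQ Q q (y k) - L \<le> c * (norm (y k - x k))\<^sup>2"
    unfolding eventually_sequentially by blast
  define c' where "c' = 2 * c / \<sigma>"
  have "0 \<le> c'" unfolding c'_def using \<open>0 \<le> c\<close> sigma_pos by simp
  have recursion: "phiQ Q q (x (Suc k)) - L \<le> c' * ((phiQ Q q (x k) - L) - (phiQ Q q (x (Suc k)) - L))"
    if "K \<le> k" for k
  proof -
    have "phiQ Q q (x (Suc k)) \<le> phiQ Q q (y k)" by (rule phi_x_Suc_le_phi_y)
    also have "phiQ Q q (y k) - L \<le> c * (norm (y k - x k))\<^sup>2" by (rule K[OF that])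
    also have "\<dots> \<le> c * (2/\<sigma> * (phiQ Q q (x k) - phiQ Q q (x (Suc k))))"
      by (rule mult_left_mono[OF step_sq_le \<open>0 \<le> c\<close>])
    finally show ?thesis by (simp add: c'_def algebra_simps)
  qed
  define \<nu> where "\<nu> = max (1/2) (c' / (1 + c'))" \<comment> \<open>\<open>1/2\<close> only keeps \<open>\<nu>\<close> positive\<close>
  have "0 < \<nu>" "\<nu> < 1" unfolding \<nu>_def using \<open>0 \<le> c'\<close> by auto
  moreover have "phiQ Q q (x k) - L \<le> \<nu> ^ (k - K) * (phiQ Q q (x K) - L)" if "K \<le> k" for k
  proof (rule geometric_decay_of_recursion[where e = "\<lambda>k. phiQ Q q (x k) - L", OF \<open>0 \<le> c'\<close>])
    show "c' / (1 + c') \<le> \<nu>" unfolding \<nu>_def by simp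
  qed (use phi_x_ge recursion that in auto)
  ultimately show ?thesis using that by blast
qed

lemma x_step_sq_le:
  obtains B where "0 \<le> B" "\<And>k. (norm (x (Suc k) - x k))\<^sup>2 \<le> B * (phiQ Q q (x k) - L)"
proof -
  define c where "c = min (\<sigma>/2) \<alpha>"
  have "0 < c" unfolding c_def using sigma_pos alpha by simp
  have "(norm (x (Suc k) - x k))\<^sup>2 \<le> 2 / c * (phiQ Q q (x k) - L)" for k
  proof -
    have "x (Suc k) - x k = (1 + t k) *\<^sub>R (y k - x k)" using x_Suc[of k] by (simp add: algebra_simps)
    then have "(norm (x (Suc k) - x k))\<^sup>2 = (1 + t k)\<^sup>2 * (norm (y k - x k))\<^sup>2"
      using t_nonneg[of k] by (simp add: power_mult_distrib)
    also have "\<dots> \<le> 2 * (1 + (t k)\<^sup>2) * (norm (y k - x k))\<^sup>2"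
    proof (intro mult_right_mono)
      have "0 \<le> (t k - 1)\<^sup>2" by simp
      then show "(1 + t k)\<^sup>2 \<le> 2 * (1 + (t k)\<^sup>2)" by (simp add: power2_eq_square algebra_simps)
    qed simp
    also have "\<dots> = 2 / c * (c * (1 + (t k)\<^sup>2) * (norm (y k - x k))\<^sup>2)" using \<open>0 < c\<close> by simp
    also have "\<dots> \<le> 2 / c * (phiQ Q q (x k) - phiQ Q q (x (Suc k)))"
    proof (intro mult_left_mono)
      have "c * (1 + (t k)\<^sup>2) \<le> \<sigma>/2 + \<alpha> * (t k)\<^sup>2"
        unfolding c_def by (simp add: distrib_left add_mono mult_right_mono)
      then show "c * (1 + (t k)\<^sup>2) * (norm (y k - x k))\<^sup>2 \<le> phiQ Q q (x k) - phiQ Q q (x (Suc k))"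
        using phi_decrease[of k] mult_right_mono[OF _ zero_le_power2[of "norm (y k - x k)"]] by fastforce
    qed (use \<open>0 < c\<close> in simp)
    also have "\<dots> \<le> 2 / c * (phiQ Q q (x k) - L)"
      using phi_x_ge[of "Suc k"] \<open>0 < c\<close> by (intro mult_left_mono) auto
    finally show ?thesis .
  qed
  then show ?thesis using that \<open>0 < c\<close> by (meson less_eq_real_def zero_le_divide_iff zero_le_numeral)
qed

lemma x_converges_R_linearly:
  obtains l C \<mu> K where "x \<longlonglongrightarrow> l" "0 < C" "0 < \<mu>" "\<mu> < 1"
    "\<And>k. K \<le> k \<Longrightarrow> norm (x k - l) \<le> C * \<mu> ^ k"
proof -
  obtain \<nu> K where \<nu>: "0 < \<nu>" "\<nu> < 1"
    and decay: "\<And>k. K \<le> k \<Longrightarrow> phiQ Q q (x k) - L \<le> \<nu> ^ (k - K) * (phiQ Q q (x K) - L)"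
    using phi_x_Q_linear by blast
  obtain B where "0 \<le> B" and step: "\<And>k. (norm (x (Suc k) - x k))\<^sup>2 \<le> B * (phiQ Q q (x k) - L)"
    using x_step_sq_le by blast
  define \<theta> where "\<theta> = sqrt \<nu>"
  have "0 < \<theta>" "\<theta> < 1" "\<theta>\<^sup>2 = \<nu>" unfolding \<theta>_def using \<nu> by auto
  define A where "A = sqrt (B * (phiQ Q q (x K) - L) / \<nu> ^ K)"
    \<comment> \<open>so that \<open>(A * \<theta>\<^sup>k)\<^sup>2 = B * \<nu>\<^sup>k\<^sup>-\<^sup>K * (\<phi>(x\<^sub>K) - L)\<close>\<close>
  have A_sq: "A\<^sup>2 = B * (phiQ Q q (x K) - L) / \<nu> ^ K" "0 \<le> A"
    unfolding A_def using \<open>0 \<le> B\<close> phi_x_ge[of K] \<nu>(1) by auto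
  have "norm (x (Suc k) - x k) \<le> A * \<theta> ^ k" if "K \<le> k" for k
  proof (rule power2_le_imp_le)
    have "(norm (x (Suc k) - x k))\<^sup>2 \<le> B * (\<nu> ^ (k - K) * (phiQ Q q (x K) - L))"
      using step[of k] mult_left_mono[OF decay[OF that] \<open>0 \<le> B\<close>] by linarith
    also have "\<dots> = A\<^sup>2 * \<nu> ^ k"
      using that \<nu>(1) unfolding A_sq(1) by (simp add: power_diff field_simps)
    also have "\<dots> = (A * \<theta> ^ k)\<^sup>2"
      by (simp add: power_mult_distrib \<open>\<theta>\<^sup>2 = \<nu>\<close>[symmetric] power_mult[symmetric] mult.commute)
    finally show "(norm (x (Suc k) - x k))\<^sup>2 \<le> (A * \<theta> ^ k)\<^sup>2" .
  qed (use A_sq(2) \<open>0 < \<theta>\<close> in simp)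
  then obtain l where "x \<longlonglongrightarrow> l" and l: "\<And>k. K \<le> k \<Longrightarrow> norm (x k - l) \<le> A * \<theta> ^ k / (1 - \<theta>)"
    using convergent_geometric_steps[OF \<open>0 < \<theta>\<close> \<open>\<theta> < 1\<close>] by metis
  define C where "C = A / (1 - \<theta>) + 1"
  have "0 < C" unfolding C_def using A_sq(2) \<open>\<theta> < 1\<close> by (simp add: add_nonneg_pos)
  moreover have "norm (x k - l) \<le> C * \<theta> ^ k" if "K \<le> k" for k
  proof -
    have "A * \<theta> ^ k / (1 - \<theta>) \<le> C * \<theta> ^ k"
      unfolding C_def using \<open>0 < \<theta>\<close> by (simp add: algebra_simps)
    then show ?thesis using l[OF that] by linarith
  qed
  ultimately show ?thesis using that \<open>x \<longlonglongrightarrow> l\<close> \<open>0 < \<theta>\<close> \<open>\<theta> < 1\<close> by blast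
qed

lemma limit_is_kkt:
  assumes lim: "x \<longlonglongrightarrow> l"
  shows "kkt Q q a b p l"
proof -
  have "(\<lambda>k. x k + (y k - x k)) \<longlonglongrightarrow> l + 0" by (intro tendsto_add lim step_tendsto_zero)
  then have y_lim: "y \<longlonglongrightarrow> l" by simp
  then have "l \<in> feas a b p"
    using closed_sequentially[OF closed_feas] y_feas by blast
  moreover have "0 \<le> (Q *v l + q) \<bullet> (z - l)" if "z \<in> feas a b p" for z
  proof -
    have "(\<lambda>k. (\<sigma> *\<^sub>R y k + q - (mat \<sigma> - Q) *v x k) \<bullet> (z - y k)) \<longlonglongrightarrow>
        (\<sigma> *\<^sub>R l + q - (mat \<sigma> - Q) *v l) \<bullet> (z - l)"
      by (intro tendsto_intros y_lim bounded_linear.tendsto[OF matrix_vector_mul_bounded_linear lim])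
    moreover have "\<forall>k. 0 \<le> (\<sigma> *\<^sub>R y k + q - (mat \<sigma> - Q) *v x k) \<bullet> (z - y k)"
      using dc_subproblem_optimality[OF sigma_pos y_feas that y_min] by blast
    ultimately have "0 \<le> (\<sigma> *\<^sub>R l + q - (mat \<sigma> - Q) *v l) \<bullet> (z - l)"
      by (intro LIMSEQ_le_const) auto
    then show ?thesis by (simp add: mat_minus_vector_mult add.commute)
  qed
  ultimately show ?thesis by (intro kkt_of_variational_inequality) auto
qed

end

lemma converges_geometrically_to_kkt:
  "\<exists>xstar. kkt Q q a b p xstar \<and> x \<longlonglongrightarrow> xstar \<and>
     (\<exists>C>0. \<exists>\<mu>. 0 < \<mu> \<and> \<mu> < 1 \<and> (\<exists>K. \<forall>k\<ge>K. norm (x k - xstar) \<le> C * \<mu> ^ k))"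
proof -
  obtain L where "(\<lambda>k. phiQ Q q (x k)) \<longlonglongrightarrow> L" using phi_x_converges by blast
  then obtain l C \<mu> K where "x \<longlonglongrightarrow> l" "0 < C" "0 < \<mu>" "\<mu> < 1"
    "\<And>k. K \<le> k \<Longrightarrow> norm (x k - l) \<le> C * \<mu> ^ k"
    using x_converges_R_linearly by blast
  moreover have "kkt Q q a b p l" using limit_is_kkt \<open>(\<lambda>k. phiQ Q q (x k)) \<longlonglongrightarrow> L\<close> calculation(1) .
  ultimately show ?thesis by blast
qed

end

lemma bdca_trajectory_of_iterates:
  assumes "transpose Q = Q" "\<sigma> > max 0 (lambda_max Q)" "\<alpha> > 0" "0 < \<beta>" "\<beta> < 1"
    and "\<exists>xs\<in>feas a b p. \<forall>z\<in>feas a b p. phiQ Q q xs \<le> phiQ Q q z"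
    and x0: "x 0 \<in> feas a b p" and iter: "\<And>k. bdca_step Q q a b p \<sigma> \<alpha> \<beta> (x k) (x (Suc k))"
  obtains y t where "bdca_trajectory Q q a b p \<sigma> \<alpha> x y t"
proof -
  have "\<forall>k. \<exists>y t. y \<in> feas a b p \<and>
      (\<forall>z\<in>feas a b p. dc_g \<sigma> q y - ((mat \<sigma> - Q) *v x k) \<bullet> y \<le> dc_g \<sigma> q z - ((mat \<sigma> - Q) *v x k) \<bullet> z) \<and>
      0 \<le> t \<and> x (Suc k) = y + t *\<^sub>R (y - x k) \<and> x (Suc k) \<in> feas a b p \<and>
      phiQ Q q (x (Suc k)) \<le> phiQ Q q y - \<alpha> * t\<^sup>2 * (norm (y - x k))\<^sup>2"
    using bdca_step_decomposition[OF iter \<open>0 < \<beta>\<close> \<open>\<beta> < 1\<close>] by blast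
  then obtain y t where step: "\<forall>k. y k \<in> feas a b p \<and>
      (\<forall>z\<in>feas a b p. dc_g \<sigma> q (y k) - ((mat \<sigma> - Q) *v x k) \<bullet> y k \<le> dc_g \<sigma> q z - ((mat \<sigma> - Q) *v x k) \<bullet> z) \<and>
      0 \<le> t k \<and> x (Suc k) = y k + t k *\<^sub>R (y k - x k) \<and> x (Suc k) \<in> feas a b p \<and>
      phiQ Q q (x (Suc k)) \<le> phiQ Q q (y k) - \<alpha> * (t k)\<^sup>2 * (norm (y k - x k))\<^sup>2"
    by metis
  have "x k \<in> feas a b p" for k using x0 step by (cases k) blast+
  then have "bdca_trajectory Q q a b p \<sigma> \<alpha> x y t"
    using assms step by unfold_locales blast+
  then show ?thesis using that by blast
qed


theorem theorem4p3:
  fixes Q :: "real^'n^'n" and q :: "real^'n" and a :: "nat \<Rightarrow> real^'n" and b :: "nat \<Rightarrow> real"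
    and p :: nat and \<sigma> \<alpha> \<beta> :: real and x :: "nat \<Rightarrow> real^'n"
  assumes symQ: "transpose Q = Q"
    and sigma: "\<sigma> > max 0 (lambda_max Q)"
    and alpha: "\<alpha> > 0" and beta: "0 < \<beta>" "\<beta> < 1"
    and solvable: "\<exists>xs\<in>feas a b p. \<forall>z\<in>feas a b p. phiQ Q q xs \<le> phiQ Q q z"
    and x0: "x 0 \<in> feas a b p"
    and iter: "\<And>k. bdca_step Q q a b p \<sigma> \<alpha> \<beta> (x k) (x (Suc k))"
  shows "\<exists>xstar. kkt Q q a b p xstar \<and> x \<longlonglongrightarrow> xstar \<and>
           (\<exists>C>0. \<exists>\<mu>. 0 < \<mu> \<and> \<mu> < 1 \<and>
              (\<exists>K. \<forall>k\<ge>K. norm (x k - xstar) \<le> C * \<mu>^k))"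
proof -
  obtain y t where "bdca_trajectory Q q a b p \<sigma> \<alpha> x y t"
    using bdca_trajectory_of_iterates[OF assms] by blast
  then show ?thesis by (rule bdca_trajectory.converges_geometrically_to_kkt)
qed

end
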